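(* Let $A$ be a dg algebra over a commutative ring $k$. Any cohesive $A$-module is a retract of a free cohesive $A$-module.
   Context: For a dg object $M$, $M^\#$ denotes its underlying graded object. A right dg $A$-module $M$ is cohesive if $M^\#\cong E\otimes_{A^0}A^\#$ for a graded right $A^0$-module $E$ that is bounded and projective and finitely generated in every degree; it is a free cohesive module if moreover $E$ can be chosen free of finite rank in every degree (equivalently $M^\#$ is a free $A^\#$-module of finite rank). Retract means retract in the category of right dg $A$-modules. *)

theory Defs
  imports Main "HOL-Library.Multiset" "HOL-Library.Function_Algebras"
begin

text \<open>A graded abelian group is a family of additive subgroups G n (n :: int) of an
ambient abelian group whose sum is direct.  All structure maps are only required/used on
homogeneous elements.\<close>

definition subgrp :: "'g::ab_group_add set \<Rightarrow> bool" where
  "subgrp S \<longleftrightarrow> 0 \<in> S \<and> (\<forall>x\<in>S. \<forall>y\<in>S. x + y \<in> S \<and> - x \<in> S)"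

definition grade_indep :: "(int \<Rightarrow> 'g::ab_group_add set) \<Rightarrow> bool" where
  "grade_indep G \<longleftrightarrow> (\<forall>S c. finite S \<longrightarrow> (\<forall>n\<in>S. c n \<in> G n) \<longrightarrow> sum c S = 0
       \<longrightarrow> (\<forall>n\<in>S. c n = 0))"

definition graded_group :: "(int \<Rightarrow> 'g::ab_group_add set) \<Rightarrow> bool" where
  "graded_group G \<longleftrightarrow> (\<forall>n. subgrp (G n)) \<and> grade_indep G"

definition sgnpow :: "int \<Rightarrow> 'g::ab_group_add \<Rightarrow> 'g" where
  "sgnpow n x = (if even n then x else - x)"

definition dg_algebra ::
  "('k::comm_ring_1 \<Rightarrow> 'a::ring_1) \<Rightarrow> (int \<Rightarrow> 'a set) \<Rightarrow> ('a \<Rightarrow> 'a) \<Rightarrow> bool" where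
  "dg_algebra \<kappa> A dA \<longleftrightarrow>
     graded_group A \<and> 1 \<in> A 0 \<and>
     (\<forall>p q. \<forall>x\<in>A p. \<forall>y\<in>A q. x * y \<in> A (p + q)) \<and>
     (\<forall>c. \<kappa> c \<in> A 0) \<and> \<kappa> 1 = 1 \<and>
     (\<forall>c c'. \<kappa> (c + c') = \<kappa> c + \<kappa> c' \<and> \<kappa> (c * c') = \<kappa> c * \<kappa> c') \<and>
     (\<forall>c p. \<forall>x\<in>A p. \<kappa> c * x = x * \<kappa> c) \<and>
     (\<forall>p. \<forall>x\<in>A p. dA x \<in> A (p + 1)) \<and>
     (\<forall>p. \<forall>x\<in>A p. \<forall>y\<in>A p. dA (x + y) = dA x + dA y) \<and>
     (\<forall>c p. \<forall>x\<in>A p. dA (\<kappa> c * x) = \<kappa> c * dA x) \<and>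
     (\<forall>p. \<forall>x\<in>A p. dA (dA x) = 0) \<and>
     (\<forall>p q. \<forall>x\<in>A p. \<forall>y\<in>A q. dA (x * y) = dA x * y + sgnpow p (x * dA y))"

definition graded_rmodule ::
  "(int \<Rightarrow> 'a::ring_1 set) \<Rightarrow> (int \<Rightarrow> 'm::ab_group_add set) \<Rightarrow> ('m \<Rightarrow> 'a \<Rightarrow> 'm) \<Rightarrow> bool" where
  "graded_rmodule A M act \<longleftrightarrow>
     graded_group M \<and>
     (\<forall>n q. \<forall>m\<in>M n. \<forall>a\<in>A q. act m a \<in> M (n + q)) \<and>
     (\<forall>n q. \<forall>m\<in>M n. \<forall>m'\<in>M n. \<forall>a\<in>A q. act (m + m') a = act m a + act m' a) \<and>
     (\<forall>n q. \<forall>m\<in>M n. \<forall>a\<in>A q. \<forall>b\<in>A q. act m (a + b) = act m a + act m b) \<and>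
     (\<forall>n p q. \<forall>m\<in>M n. \<forall>a\<in>A p. \<forall>b\<in>A q. act (act m a) b = act m (a * b)) \<and>
     (\<forall>n. \<forall>m\<in>M n. act m 1 = m)"

definition dg_rmodule ::
  "(int \<Rightarrow> 'a::ring_1 set) \<Rightarrow> ('a \<Rightarrow> 'a) \<Rightarrow> (int \<Rightarrow> 'm::ab_group_add set) \<Rightarrow>
   ('m \<Rightarrow> 'a \<Rightarrow> 'm) \<Rightarrow> ('m \<Rightarrow> 'm) \<Rightarrow> bool" where
  "dg_rmodule A dA M act dM \<longleftrightarrow>
     graded_rmodule A M act \<and>
     (\<forall>n. \<forall>m\<in>M n. dM m \<in> M (n + 1)) \<and>
     (\<forall>n. \<forall>m\<in>M n. \<forall>m'\<in>M n. dM (m + m') = dM m + dM m') \<and>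
     (\<forall>n. \<forall>m\<in>M n. dM (dM m) = 0) \<and>
     (\<forall>n q. \<forall>m\<in>M n. \<forall>a\<in>A q. dM (act m a) = act (dM m) a + sgnpow n (act m (dA a)))"

definition dg_hom ::
  "(int \<Rightarrow> 'a::ring_1 set) \<Rightarrow>
   (int \<Rightarrow> 'm::ab_group_add set) \<Rightarrow> ('m \<Rightarrow> 'a \<Rightarrow> 'm) \<Rightarrow> ('m \<Rightarrow> 'm) \<Rightarrow>
   (int \<Rightarrow> 'n::ab_group_add set) \<Rightarrow> ('n \<Rightarrow> 'a \<Rightarrow> 'n) \<Rightarrow> ('n \<Rightarrow> 'n) \<Rightarrow> ('m \<Rightarrow> 'n) \<Rightarrow> bool" where
  "dg_hom A M actM dM N actN dN f \<longleftrightarrow>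
     (\<forall>n. \<forall>m\<in>M n. f m \<in> N n) \<and>
     (\<forall>n. \<forall>m\<in>M n. \<forall>m'\<in>M n. f (m + m') = f m + f m') \<and>
     (\<forall>n q. \<forall>m\<in>M n. \<forall>a\<in>A q. f (actM m a) = actN (f m) a) \<and>
     (\<forall>n. \<forall>m\<in>M n. f (dM m) = dN (f m))"

text \<open>The free graded right A^#-module with basis e_0,...,e_{r-1}, deg e_i = s i.
Elements are coefficient vectors v (v i = coefficient of e_i, zero for i >= r);
its degree-n component consists of those v with v i in A (n - s i).\<close>

definition free_comp :: "(int \<Rightarrow> 'a::ring_1 set) \<Rightarrow> nat \<Rightarrow> (nat \<Rightarrow> int) \<Rightarrow> int \<Rightarrow> (nat \<Rightarrow> 'a) set" where
  "free_comp A r s n = {v. (\<forall>i<r. v i \<in> A (n - s i)) \<and> (\<forall>i\<ge>r. v i = 0)}"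

definition free_act :: "(nat \<Rightarrow> 'a::ring_1) \<Rightarrow> 'a \<Rightarrow> (nat \<Rightarrow> 'a)" where
  "free_act v a = (\<lambda>i. v i * a)"

definition graded_rmod0 ::
  "(int \<Rightarrow> 'a::ring_1 set) \<Rightarrow> (int \<Rightarrow> 'e::ab_group_add set) \<Rightarrow> ('e \<Rightarrow> 'a \<Rightarrow> 'e) \<Rightarrow> bool" where
  "graded_rmod0 A E actE \<longleftrightarrow>
     graded_group E \<and>
     (\<forall>p. \<forall>e\<in>E p. \<forall>r\<in>A 0. actE e r \<in> E p) \<and>
     (\<forall>p. \<forall>e\<in>E p. \<forall>e'\<in>E p. \<forall>r\<in>A 0. actE (e + e') r = actE e r + actE e' r) \<and>
     (\<forall>p. \<forall>e\<in>E p. \<forall>r\<in>A 0. \<forall>r'\<in>A 0. actE e (r + r') = actE e r + actE e r') \<and>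
     (\<forall>p. \<forall>e\<in>E p. \<forall>r\<in>A 0. \<forall>r'\<in>A 0. actE (actE e r) r' = actE e (r * r')) \<and>
     (\<forall>p. \<forall>e\<in>E p. actE e 1 = e)"

definition bounded_graded :: "(int \<Rightarrow> 'e::ab_group_add set) \<Rightarrow> bool" where
  "bounded_graded E \<longleftrightarrow> (\<exists>N. \<forall>p. N < \<bar>p\<bar> \<longrightarrow> E p = {0})"

definition fg_projective ::
  "(int \<Rightarrow> 'a::ring_1 set) \<Rightarrow> 'e::ab_group_add set \<Rightarrow> ('e \<Rightarrow> 'a \<Rightarrow> 'e) \<Rightarrow> bool" where
  "fg_projective A P actE \<longleftrightarrow>
     (\<exists>r (\<iota>::'e \<Rightarrow> nat \<Rightarrow> 'a) (\<pi>::(nat \<Rightarrow> 'a) \<Rightarrow> 'e).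
        let F = free_comp A r (\<lambda>_. 0) 0 in
        (\<forall>e\<in>P. \<iota> e \<in> F) \<and>
        (\<forall>e\<in>P. \<forall>e'\<in>P. \<iota> (e + e') = \<iota> e + \<iota> e') \<and>
        (\<forall>e\<in>P. \<forall>s\<in>A 0. \<iota> (actE e s) = free_act (\<iota> e) s) \<and>
        (\<forall>v\<in>F. \<pi> v \<in> P) \<and>
        (\<forall>v\<in>F. \<forall>w\<in>F. \<pi> (v + w) = \<pi> v + \<pi> w) \<and>
        (\<forall>v\<in>F. \<forall>s\<in>A 0. \<pi> (free_act v s) = actE (\<pi> v) s) \<and>
        (\<forall>e\<in>P. \<pi> (\<iota> e) = e))"

text \<open>The tensor product E \<otimes>_{A^0} A^#, presented as the formal sums (multisets) of
pairs (e, a) of homogeneous elements modulo the congruence generated by the defining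
relations of the tensor product.\<close>

inductive tcong :: "(int \<Rightarrow> 'e::ab_group_add set) \<Rightarrow> ('e \<Rightarrow> 'a::ring_1 \<Rightarrow> 'e) \<Rightarrow> (int \<Rightarrow> 'a set) \<Rightarrow>
    ('e \<times> 'a) multiset \<Rightarrow> ('e \<times> 'a) multiset \<Rightarrow> bool"
  for E actE A where
  refl: "tcong E actE A X X"
| sym: "tcong E actE A X Y \<Longrightarrow> tcong E actE A Y X"
| trans: "tcong E actE A X Y \<Longrightarrow> tcong E actE A Y Z \<Longrightarrow> tcong E actE A X Z"
| add: "tcong E actE A X Y \<Longrightarrow> tcong E actE A (X + Z) (Y + Z)"
| zero_l: "a \<in> A q \<Longrightarrow> tcong E actE A {#(0, a)#} {#}"
| zero_r: "e \<in> E p \<Longrightarrow> tcong E actE A {#(e, 0)#} {#}"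
| add_l: "e \<in> E p \<Longrightarrow> e' \<in> E p \<Longrightarrow> a \<in> A q \<Longrightarrow>
          tcong E actE A {#(e + e', a)#} {#(e, a), (e', a)#}"
| add_r: "e \<in> E p \<Longrightarrow> a \<in> A q \<Longrightarrow> a' \<in> A q \<Longrightarrow>
          tcong E actE A {#(e, a + a')#} {#(e, a), (e, a')#}"
| bal: "e \<in> E p \<Longrightarrow> r \<in> A 0 \<Longrightarrow> a \<in> A q \<Longrightarrow>
          tcong E actE A {#(actE e r, a)#} {#(e, r * a)#}"

definition tensor_all :: "(int \<Rightarrow> 'e set) \<Rightarrow> (int \<Rightarrow> 'a set) \<Rightarrow> ('e \<times> 'a) multiset set" where
  "tensor_all E A = {X. \<forall>x\<in>#X. \<exists>p q. fst x \<in> E p \<and> snd x \<in> A q}"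

definition tensor_part :: "(int \<Rightarrow> 'e set) \<Rightarrow> (int \<Rightarrow> 'a set) \<Rightarrow> int \<Rightarrow> ('e \<times> 'a) multiset set" where
  "tensor_part E A n = {X. \<forall>x\<in>#X. \<exists>p q. p + q = n \<and> fst x \<in> E p \<and> snd x \<in> A q}"

definition tens_val :: "('e \<Rightarrow> 'a \<Rightarrow> 'm::comm_monoid_add) \<Rightarrow> ('e \<times> 'a) multiset \<Rightarrow> 'm" where
  "tens_val \<psi> X = sum_mset (image_mset (\<lambda>x. \<psi> (fst x) (snd x)) X)"

text \<open>psi (e, a) is the image of e \<otimes> a: the induced map E \<otimes>_{A^0} A^# -> M^# is a
well-defined injective map of right A^#-modules (tens_val X = tens_val Y iff X ~ Y),
compatible with the right A^#-action, and maps the degree-n part onto M n;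
i.e. an isomorphism of graded right A^#-modules.\<close>
definition tensor_iso ::
  "(int \<Rightarrow> 'e::ab_group_add set) \<Rightarrow> ('e \<Rightarrow> 'a::ring_1 \<Rightarrow> 'e) \<Rightarrow> (int \<Rightarrow> 'a set) \<Rightarrow>
   (int \<Rightarrow> 'm::ab_group_add set) \<Rightarrow> ('m \<Rightarrow> 'a \<Rightarrow> 'm) \<Rightarrow> ('e \<Rightarrow> 'a \<Rightarrow> 'm) \<Rightarrow> bool" where
  "tensor_iso E actE A M actM \<psi> \<longleftrightarrow>
     (\<forall>p q s. \<forall>e\<in>E p. \<forall>a\<in>A q. \<forall>b\<in>A s. actM (\<psi> e a) b = \<psi> e (a * b)) \<and>
     (\<forall>X\<in>tensor_all E A. \<forall>Y\<in>tensor_all E A.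
        tens_val \<psi> X = tens_val \<psi> Y \<longleftrightarrow> tcong E actE A X Y) \<and>
     (\<forall>n. M n = tens_val \<psi> ` tensor_part E A n)"

definition cohesive_via ::
  "(int \<Rightarrow> 'a::ring_1 set) \<Rightarrow> (int \<Rightarrow> 'm::ab_group_add set) \<Rightarrow> ('m \<Rightarrow> 'a \<Rightarrow> 'm) \<Rightarrow>
   (int \<Rightarrow> 'e::ab_group_add set) \<Rightarrow> ('e \<Rightarrow> 'a \<Rightarrow> 'e) \<Rightarrow> ('e \<Rightarrow> 'a \<Rightarrow> 'm) \<Rightarrow> bool" where
  "cohesive_via A M actM E actE \<psi> \<longleftrightarrow>
     graded_rmod0 A E actE \<and> bounded_graded E \<and> (\<forall>p. fg_projective A (E p) actE) \<and>
     tensor_iso E actE A M actM \<psi>"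

definition retract_of_free ::
  "(int \<Rightarrow> 'a::ring_1 set) \<Rightarrow> ('a \<Rightarrow> 'a) \<Rightarrow>
   (int \<Rightarrow> 'm::ab_group_add set) \<Rightarrow> ('m \<Rightarrow> 'a \<Rightarrow> 'm) \<Rightarrow> ('m \<Rightarrow> 'm) \<Rightarrow>
   nat \<Rightarrow> (nat \<Rightarrow> int) \<Rightarrow> ((nat \<Rightarrow> 'a) \<Rightarrow> (nat \<Rightarrow> 'a)) \<Rightarrow> bool" where
  "retract_of_free A dA M actM dM r s dF \<longleftrightarrow>
     dg_rmodule A dA (free_comp A r s) free_act dF \<and>
     (\<exists>f g. dg_hom A M actM dM (free_comp A r s) free_act dF f \<and>
            dg_hom A (free_comp A r s) free_act dF M actM dM g \<and>
            (\<forall>n. \<forall>m\<in>M n. g (f m) = m))"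

end

theory Submission
  imports Defs
begin

text \<open>
  Write \<open>M\<^sup>#\<close> \<open>\<cong>\<close> \<open>E \<otimes>\<^bsub>A\<^sup>0\<^esub> A\<^sup>#\<close>. Since \<open>E\<close> is bounded and finitely generated projective in each
  degree, it is a graded retract of a free graded \<open>A\<^sup>0\<close>-module of finite rank, hence \<open>M\<^sup>#\<close>
  is a retract \<open>\<Gamma> \<circ> \<Phi> = id\<close> of a free graded \<open>A\<^sup>#\<close>-module \<open>P\<close> of finite rank.
  The idempotent \<open>e = \<Phi> \<circ> \<Gamma>\<close> need not commute with the differential of \<open>P\<close>, so this is
  not yet a retraction of dg modules. Instead, \<open>\<nabla> = \<Phi> d\<^sub>M \<Gamma> + (1 - e) d\<^sub>P (1 - e)\<close> is a
  connection on \<open>P\<close> extending \<open>d\<^sub>M\<close>, whose curvature \<open>\<nabla>\<^sup>2\<close> is \<open>A\<close>-linear and satisfies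
  \<open>e \<nabla>\<^sup>2 = 0\<close>. On the free module \<open>P \<oplus> P[1]\<close> the twisted differential
  \<open>D(x, y) = (\<nabla>x + (1 - e) y, - \<nabla>\<^sup>2x - \<nabla>y)\<close> squares to zero, and
  \<open>m \<mapsto> (\<Phi> m, 0)\<close>, \<open>(x, y) \<mapsto> \<Gamma> x\<close> exhibit \<open>M\<close> as a dg retract of it.
\<close>

lemma subgrp_zero: "subgrp S \<Longrightarrow> 0 \<in> S"
  by (simp add: subgrp_def)
lemma subgrp_add: "subgrp S \<Longrightarrow> x \<in> S \<Longrightarrow> y \<in> S \<Longrightarrow> x + y \<in> S"
  by (simp add: subgrp_def)
lemma subgrp_neg: "subgrp S \<Longrightarrow> x \<in> S \<Longrightarrow> - x \<in> S"
  by (simp add: subgrp_def)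
lemma subgrp_diff: "subgrp S \<Longrightarrow> x \<in> S \<Longrightarrow> y \<in> S \<Longrightarrow> x - y \<in> S"
  by (metis subgrp_add subgrp_neg diff_conv_add_uminus)
lemma subgrp_sum: "subgrp S \<Longrightarrow> (\<And>i. i \<in> I \<Longrightarrow> f i \<in> S) \<Longrightarrow> sum f I \<in> S"
proof (induction I rule: infinite_finite_induct)
  case (insert x F)
  then show ?case by (simp add: subgrp_add)
qed (simp_all add: subgrp_zero)

lemma sgnpow_0 [simp]: "sgnpow n 0 = 0"
  by (simp add: sgnpow_def)
lemma sgnpow_add: "sgnpow n (x + y) = sgnpow n x + sgnpow n y"
  by (simp add: sgnpow_def)
lemma sgnpow_sgnpow: "sgnpow m (sgnpow n x) = sgnpow (m + n) x"
  by (auto simp add: sgnpow_def)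
lemma sgnpow_succ: "sgnpow (n + 1) x = - sgnpow n x"
  by (auto simp add: sgnpow_def)
lemma sgnpow_succ': "sgnpow (1 + n) x = - sgnpow n x"
  by (auto simp add: sgnpow_def)
lemma sgnpow_mem: "subgrp S \<Longrightarrow> x \<in> S \<Longrightarrow> sgnpow n x \<in> S"
  by (simp add: sgnpow_def subgrp_neg)
lemma sgnpow_mult: "sgnpow n (x::'a::ring) * a = sgnpow n (x * a)"
  by (simp add: sgnpow_def)
lemma sgnpow_apply: "(sgnpow n v) i = sgnpow n (v i)"
  by (simp add: sgnpow_def)
lemma free_act_add: "free_act (v + w) a = free_act v a + free_act w a"
  by (simp add: free_act_def fun_eq_iff distrib_right)
lemma free_act_minus: "free_act (- v) a = - free_act v a"
  by (simp add: free_act_def fun_eq_iff)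
lemma free_act_diff: "free_act (v - w) a = free_act v a - free_act w a"
  by (simp add: free_act_def fun_eq_iff left_diff_distrib)
lemma free_act_zero [simp]: "free_act 0 a = 0"
  by (simp add: free_act_def fun_eq_iff)
lemma free_act_rzero [simp]: "free_act v 0 = 0"
  by (simp add: free_act_def fun_eq_iff)
lemma free_act_assoc: "free_act (free_act v a) b = free_act v (a * b)"
  by (simp add: free_act_def mult.assoc)
lemma free_act_radd: "free_act v (a + b) = free_act v a + free_act v b"
  by (simp add: free_act_def fun_eq_iff distrib_left)
lemma sum_fun_apply: "(sum f I) i = sum (\<lambda>n. f n i) I"
  by (induction I rule: infinite_finite_induct) auto

section \<open>Free graded modules over a dg algebra\<close>

definition fg_proj_data ::
  "(int \<Rightarrow> 'a::ring_1 set) \<Rightarrow> 'e::ab_group_add set \<Rightarrow> ('e \<Rightarrow> 'a \<Rightarrow> 'e) \<Rightarrow> nat \<Rightarrow>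
    ('e \<Rightarrow> nat \<Rightarrow> 'a) \<Rightarrow> ((nat \<Rightarrow> 'a) \<Rightarrow> 'e) \<Rightarrow> bool" where
  "fg_proj_data A P actE r \<iota> \<pi> \<longleftrightarrow>
        (\<forall>e\<in>P. \<iota> e \<in> free_comp A r (\<lambda>_. 0) 0) \<and>
        (\<forall>e\<in>P. \<forall>e'\<in>P. \<iota> (e + e') = \<iota> e + \<iota> e') \<and>
        (\<forall>e\<in>P. \<forall>s\<in>A 0. \<iota> (actE e s) = free_act (\<iota> e) s) \<and>
        (\<forall>v\<in>free_comp A r (\<lambda>_. 0) 0. \<pi> v \<in> P) \<and>
        (\<forall>v\<in>free_comp A r (\<lambda>_. 0) 0. \<forall>w\<in>free_comp A r (\<lambda>_. 0) 0. \<pi> (v + w) = \<pi> v + \<pi> w) \<and>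
        (\<forall>v\<in>free_comp A r (\<lambda>_. 0) 0. \<forall>s\<in>A 0. \<pi> (free_act v s) = actE (\<pi> v) s) \<and>
        (\<forall>e\<in>P. \<pi> (\<iota> e) = e)"

lemma fg_projective_iff: "fg_projective A P actE \<longleftrightarrow> (\<exists>r \<iota> \<pi>. fg_proj_data A P actE r \<iota> \<pi>)"
  by (simp add: fg_projective_def fg_proj_data_def Let_def)

definition unit_vec :: "nat \<Rightarrow> nat \<Rightarrow> 'a::ring_1" where
  "unit_vec j = (\<lambda>t. if t = j then 1 else 0)"

locale dga =
  fixes \<kappa> :: "'k::comm_ring_1 \<Rightarrow> 'a::ring_1" and A :: "int \<Rightarrow> 'a set" and dA :: "'a \<Rightarrow> 'a"
  assumes dg_alg: "dg_algebra \<kappa> A dA"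
begin

lemma A_sub: "subgrp (A n)"
  using dg_alg by (simp add: dg_algebra_def graded_group_def)
lemma A_indep: "grade_indep A"
  using dg_alg by (simp add: dg_algebra_def graded_group_def)
lemma A_zero [simp]: "0 \<in> A n"
  using A_sub subgrp_zero by blast
lemma A_add: "x \<in> A n \<Longrightarrow> y \<in> A n \<Longrightarrow> x + y \<in> A n"
  using A_sub subgrp_add by blast
lemma A_neg: "x \<in> A n \<Longrightarrow> - x \<in> A n"
  using A_sub subgrp_neg by blast
lemma A_diff: "x \<in> A n \<Longrightarrow> y \<in> A n \<Longrightarrow> x - y \<in> A n"
  using A_sub subgrp_diff by blast
lemma A_sgnpow: "x \<in> A n \<Longrightarrow> sgnpow k x \<in> A n"
  using A_sub sgnpow_mem by blast
lemma A_one: "1 \<in> A 0"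
  using dg_alg by (simp add: dg_algebra_def)
lemma A_mult: "x \<in> A p \<Longrightarrow> y \<in> A q \<Longrightarrow> k = p + q \<Longrightarrow> x * y \<in> A k"
  using dg_alg by (simp add: dg_algebra_def)
lemma dA_mem: "x \<in> A p \<Longrightarrow> k = p + 1 \<Longrightarrow> dA x \<in> A k"
  using dg_alg by (simp add: dg_algebra_def)
lemma dA_add: "x \<in> A p \<Longrightarrow> y \<in> A p \<Longrightarrow> dA (x + y) = dA x + dA y"
  using dg_alg by (simp add: dg_algebra_def)
lemma dA_zero [simp]: "dA 0 = 0"
proof -
  have "dA (0 + 0) = dA 0 + dA 0" using dA_add[of 0 0 0] by simp
  then show ?thesis by simp
qed
lemma dA_dA: "x \<in> A p \<Longrightarrow> dA (dA x) = 0"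
  using dg_alg by (simp add: dg_algebra_def)
lemma dA_mult: "x \<in> A p \<Longrightarrow> y \<in> A q \<Longrightarrow> dA (x * y) = dA x * y + sgnpow p (x * dA y)"
  using dg_alg by (simp add: dg_algebra_def)

lemma free_comp_iff: "v \<in> free_comp A R s n \<longleftrightarrow> (\<forall>i<R. v i \<in> A (n - s i)) \<and> (\<forall>i. R \<le> i \<longrightarrow> v i = 0)"
  by (auto simp add: free_comp_def)
lemma free_comp_in: "v \<in> free_comp A R s n \<Longrightarrow> i < R \<Longrightarrow> k = n - s i \<Longrightarrow> v i \<in> A k"
  by (simp add: free_comp_iff)
lemma free_comp_zero [simp]: "0 \<in> free_comp A R s n"
  by (simp add: free_comp_iff)
lemma free_comp_add: "v \<in> free_comp A R s n \<Longrightarrow> w \<in> free_comp A R s n \<Longrightarrow> v + w \<in> free_comp A R s n"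
  by (simp add: free_comp_iff A_add)
lemma free_comp_neg: "v \<in> free_comp A R s n \<Longrightarrow> - v \<in> free_comp A R s n"
  by (simp add: free_comp_iff A_neg)
lemma free_comp_diff: "v \<in> free_comp A R s n \<Longrightarrow> w \<in> free_comp A R s n \<Longrightarrow> v - w \<in> free_comp A R s n"
  by (simp add: free_comp_iff A_diff)
lemma free_comp_sgnpow: "v \<in> free_comp A R s n \<Longrightarrow> sgnpow k v \<in> free_comp A R s n"
  by (simp add: sgnpow_def free_comp_neg)
lemma free_comp_sub: "subgrp (free_comp A R s n)"
  by (simp add: subgrp_def free_comp_add free_comp_neg)
lemma free_comp_sum: "(\<And>i. i \<in> I \<Longrightarrow> f i \<in> free_comp A R s n) \<Longrightarrow> sum f I \<in> free_comp A R s n"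
  using subgrp_sum[OF free_comp_sub] .
lemma free_comp_act: "v \<in> free_comp A R s n \<Longrightarrow> a \<in> A q \<Longrightarrow> k = n + q \<Longrightarrow> free_act v a \<in> free_comp A R s k"
  by (auto simp add: free_comp_iff free_act_def intro: A_mult)

lemma free_comp_indep: "grade_indep (free_comp A R s)"
  unfolding grade_indep_def
proof (intro allI impI ballI)
  fix S c n
  assume S: "finite S" and c: "\<forall>n\<in>S. c n \<in> free_comp A R s n" and s0: "sum c S = 0" and n: "n \<in> S"
  show "c n = 0"
  proof
    fix i
    show "c n i = 0 i"
    proof (cases "i < R")
      case False
      then show ?thesis using c n by (simp add: free_comp_iff)
    next
      case True
      define c' where "c' m = c (m + s i) i" for m
      have inj: "inj_on (\<lambda>n. n - s i) S" by (auto simp: inj_on_def)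
      have "sum c' ((\<lambda>n. n - s i) ` S) = sum (\<lambda>n. c n i) S"
        by (simp add: sum.reindex[OF inj] c'_def)
      also have "\<dots> = 0" using s0 by (metis sum_fun_apply zero_fun_apply)
      finally have "sum c' ((\<lambda>n. n - s i) ` S) = 0" .
      moreover have "\<forall>m\<in>(\<lambda>n. n - s i) ` S. c' m \<in> A m"
        using c True by (auto simp: c'_def free_comp_iff)
      ultimately have "\<forall>m\<in>(\<lambda>n. n - s i) ` S. c' m = 0"
        using A_indep S unfolding grade_indep_def by blast
      then have "c' (n - s i) = 0" using n by blast
      then show ?thesis by (simp add: c'_def)
    qed
  qed
qed

lemma free_comp_graded: "graded_group (free_comp A R s)"
  by (simp add: graded_group_def free_comp_sub free_comp_indep)

lemma free_comp_rmod: "graded_rmodule A (free_comp A R s) free_act"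
  unfolding graded_rmodule_def
  by (simp add: free_comp_graded free_comp_act free_act_add free_act_radd free_act_assoc)
    (simp add: free_act_def)

definition free_diff :: "nat \<Rightarrow> (nat \<Rightarrow> int) \<Rightarrow> (nat \<Rightarrow> 'a) \<Rightarrow> nat \<Rightarrow> 'a" where
  "free_diff R s v = (\<lambda>i. if i < R then sgnpow (s i) (dA (v i)) else 0)"

lemma free_diff_mem: "v \<in> free_comp A R s n \<Longrightarrow> k = n + 1 \<Longrightarrow> free_diff R s v \<in> free_comp A R s k"
  by (auto simp: free_diff_def free_comp_iff intro!: A_sgnpow dA_mem)
lemma free_diff_zero [simp]: "free_diff R s 0 = 0"
  by (simp add: free_diff_def fun_eq_iff)
lemma free_diff_add: "v \<in> free_comp A R s n \<Longrightarrow> w \<in> free_comp A R s n \<Longrightarrow> free_diff R s (v + w) = free_diff R s v + free_diff R s w"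
  by (auto simp: free_diff_def fun_eq_iff free_comp_iff dA_add sgnpow_add)
lemma free_diff_act: "v \<in> free_comp A R s n \<Longrightarrow> a \<in> A q \<Longrightarrow>
    free_diff R s (free_act v a) = free_act (free_diff R s v) a + sgnpow n (free_act v (dA a))"
proof (rule ext)
  fix i
  assume v: "v \<in> free_comp A R s n" and a: "a \<in> A q"
  show "free_diff R s (free_act v a) i = (free_act (free_diff R s v) a + sgnpow n (free_act v (dA a))) i"
  proof (cases "i < R")
    case True
    then have vi: "v i \<in> A (n - s i)" using v by (simp add: free_comp_iff)
    have "free_diff R s (free_act v a) i = sgnpow (s i) (dA (v i * a))"
      using True by (simp add: free_diff_def free_act_def)
    also have "\<dots> = sgnpow (s i) (dA (v i) * a) + sgnpow (s i + (n - s i)) (v i * dA a)"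
      using dA_mult[OF vi a] by (simp add: sgnpow_add sgnpow_sgnpow)
    also have "\<dots> = (free_act (free_diff R s v) a + sgnpow n (free_act v (dA a))) i"
      using True by (simp add: free_diff_def free_act_def sgnpow_apply sgnpow_mult)
    finally show ?thesis .
  next
    case False
    then show ?thesis using v by (simp add: free_diff_def free_act_def sgnpow_apply free_comp_iff)
  qed
qed

lemma unit_vec_mem: "j < r \<Longrightarrow> unit_vec j \<in> free_comp A r (\<lambda>_. 0) 0"
  by (auto simp: free_comp_iff unit_vec_def A_one)

lemma free_comp_decomp: "v \<in> free_comp A r (\<lambda>_. 0) 0 \<Longrightarrow> v = (\<Sum>j<r. free_act (unit_vec j) (v j))"
proof (rule ext)
  fix t assume v: "v \<in> free_comp A r (\<lambda>_. 0) 0"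
  have "(\<Sum>j<r. free_act (unit_vec j) (v j)) t = (\<Sum>j<r. unit_vec j t * v j)"
    by (simp add: sum_fun_apply free_act_def)
  also have "\<dots> = (\<Sum>j<r. if t = j then v j else 0)"
    by (rule sum.cong) (auto simp: unit_vec_def)
  also have "\<dots> = (if t \<in> {..<r} then v t else 0)"
    by (rule sum.delta') simp
  also have "\<dots> = v t" using v by (simp add: free_comp_iff)
  finally show "v t = (\<Sum>j<r. free_act (unit_vec j) (v j)) t" by simp
qed

lemma fg_proj_data_\<iota>_mem: "fg_proj_data A P actE r \<iota> \<pi> \<Longrightarrow> e \<in> P \<Longrightarrow> \<iota> e \<in> free_comp A r (\<lambda>_. 0) 0"
  by (simp add: fg_proj_data_def)
lemma fg_proj_data_\<iota>_add: "fg_proj_data A P actE r \<iota> \<pi> \<Longrightarrow> e \<in> P \<Longrightarrow> e' \<in> P \<Longrightarrow> \<iota> (e + e') = \<iota> e + \<iota> e'"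
  by (simp add: fg_proj_data_def)
lemma fg_proj_data_\<iota>_act: "fg_proj_data A P actE r \<iota> \<pi> \<Longrightarrow> e \<in> P \<Longrightarrow> s \<in> A 0 \<Longrightarrow> \<iota> (actE e s) = free_act (\<iota> e) s"
  by (simp add: fg_proj_data_def)
lemma fg_proj_data_\<pi>_mem: "fg_proj_data A P actE r \<iota> \<pi> \<Longrightarrow> v \<in> free_comp A r (\<lambda>_. 0) 0 \<Longrightarrow> \<pi> v \<in> P"
  by (simp add: fg_proj_data_def)
lemma fg_proj_data_\<pi>_add: "fg_proj_data A P actE r \<iota> \<pi> \<Longrightarrow> v \<in> free_comp A r (\<lambda>_. 0) 0 \<Longrightarrow> w \<in> free_comp A r (\<lambda>_. 0) 0 \<Longrightarrow> \<pi> (v + w) = \<pi> v + \<pi> w"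
  by (simp add: fg_proj_data_def)
lemma fg_proj_data_\<pi>_act: "fg_proj_data A P actE r \<iota> \<pi> \<Longrightarrow> v \<in> free_comp A r (\<lambda>_. 0) 0 \<Longrightarrow> s \<in> A 0 \<Longrightarrow> \<pi> (free_act v s) = actE (\<pi> v) s"
  by (simp add: fg_proj_data_def)
lemma fg_proj_data_\<pi>\<iota>: "fg_proj_data A P actE r \<iota> \<pi> \<Longrightarrow> e \<in> P \<Longrightarrow> \<pi> (\<iota> e) = e"
  by (simp add: fg_proj_data_def)

lemma fg_proj_data_\<iota>0: "fg_proj_data A P actE r \<iota> \<pi> \<Longrightarrow> 0 \<in> P \<Longrightarrow> \<iota> 0 = 0"
proof -
  assume f: "fg_proj_data A P actE r \<iota> \<pi>" and z: "0 \<in> P"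
  have "\<iota> (0 + 0) = \<iota> 0 + \<iota> 0" using fg_proj_data_\<iota>_add[OF f z z] .
  then show ?thesis by simp
qed
lemma fg_proj_data_\<pi>0: "fg_proj_data A P actE r \<iota> \<pi> \<Longrightarrow> \<pi> 0 = 0"
proof -
  assume f: "fg_proj_data A P actE r \<iota> \<pi>"
  have "\<pi> (0 + 0) = \<pi> 0 + \<pi> 0" using fg_proj_data_\<pi>_add[OF f free_comp_zero free_comp_zero] .
  then show ?thesis by simp
qed
lemma fg_proj_data_\<pi>_sum:
  assumes f: "fg_proj_data A P actE r \<iota> \<pi>"
  shows "finite J \<Longrightarrow> (\<And>j. j \<in> J \<Longrightarrow> f j \<in> free_comp A r (\<lambda>_. 0) 0) \<Longrightarrow>
    \<pi> (sum f J) = (\<Sum>j\<in>J. \<pi> (f j))"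
proof (induction J rule: finite_induct)
  case empty
  show ?case by (simp only: sum.empty fg_proj_data_\<pi>0[OF f])
next
  case (insert x F)
  have "\<pi> (sum f (insert x F)) = \<pi> (f x + sum f F)" by (simp only: sum.insert[OF insert.hyps])
  also have "\<dots> = \<pi> (f x) + \<pi> (sum f F)"
    by (rule fg_proj_data_\<pi>_add[OF f]) (use insert.prems in \<open>auto intro: free_comp_sum\<close>)
  also have "\<pi> (sum f F) = (\<Sum>j\<in>F. \<pi> (f j))" using insert.IH insert.prems by blast
  finally show ?case by (simp only: sum.insert[OF insert.hyps])
qed
lemma fg_proj_data_\<pi>_decomp: "fg_proj_data A P actE r \<iota> \<pi> \<Longrightarrow> v \<in> free_comp A r (\<lambda>_. 0) 0 \<Longrightarrow>
    \<pi> v = (\<Sum>j<r. actE (\<pi> (unit_vec j)) (v j))"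
proof -
  assume f: "fg_proj_data A P actE r \<iota> \<pi>" and v: "v \<in> free_comp A r (\<lambda>_. 0) 0"
  have vj: "v j \<in> A 0" if "j < r" for j using free_comp_in[OF v that] by simp
  have "\<pi> v = \<pi> (\<Sum>j<r. free_act (unit_vec j) (v j))" using free_comp_decomp[OF v] by simp
  also have "\<dots> = (\<Sum>j<r. \<pi> (free_act (unit_vec j) (v j)))"
    by (rule fg_proj_data_\<pi>_sum[OF f]) (auto intro: free_comp_act[OF unit_vec_mem vj])
  also have "\<dots> = (\<Sum>j<r. actE (\<pi> (unit_vec j)) (v j))"
    by (rule sum.cong) (auto simp: fg_proj_data_\<pi>_act[OF f unit_vec_mem vj])
  finally show ?thesis .
qed

end

locale dg_module = dga \<kappa> A dA
  for \<kappa> :: "'k::comm_ring_1 \<Rightarrow> 'a::ring_1" and A dA +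
  fixes M :: "int \<Rightarrow> 'm::ab_group_add set" and actM :: "'m \<Rightarrow> 'a \<Rightarrow> 'm" and dM :: "'m \<Rightarrow> 'm"
  assumes M_dg: "dg_rmodule A dA M actM dM"
begin

lemma M_rmod: "graded_rmodule A M actM"
  using M_dg by (simp add: dg_rmodule_def)
lemma M_sub: "subgrp (M n)"
  using M_rmod by (simp add: graded_rmodule_def graded_group_def)
lemma M_zero [simp]: "0 \<in> M n"
  using M_sub subgrp_zero by blast
lemma M_neg: "x \<in> M n \<Longrightarrow> - x \<in> M n"
  using M_sub subgrp_neg by blast
lemma M_sum: "(\<And>i. i \<in> I \<Longrightarrow> f i \<in> M n) \<Longrightarrow> sum f I \<in> M n"
  using subgrp_sum[OF M_sub] .
lemma act_mem: "m \<in> M n \<Longrightarrow> a \<in> A q \<Longrightarrow> k = n + q \<Longrightarrow> actM m a \<in> M k"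
  using M_rmod by (simp add: graded_rmodule_def)
lemma act_add: "m \<in> M n \<Longrightarrow> m' \<in> M n \<Longrightarrow> a \<in> A q \<Longrightarrow> actM (m + m') a = actM m a + actM m' a"
  using M_rmod by (simp add: graded_rmodule_def)
lemma act_zero: "a \<in> A q \<Longrightarrow> actM 0 a = 0"
proof -
  assume a: "a \<in> A q"
  have "actM (0 + 0) a = actM 0 a + actM 0 a" using act_add[OF M_zero M_zero a] .
  then show ?thesis by simp
qed
lemma act_sum: "(\<And>i. i \<in> I \<Longrightarrow> f i \<in> M n) \<Longrightarrow> a \<in> A q \<Longrightarrow> actM (sum f I) a = (\<Sum>i\<in>I. actM (f i) a)"
proof (induction I rule: infinite_finite_induct)
  case (infinite A)
  then show ?case by (simp add: act_zero)
next
  case empty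
  then show ?case by (simp add: act_zero)
next
  case (insert x F)
  have "actM (sum f (insert x F)) a = actM (f x + sum f F) a" using insert by simp
  also have "\<dots> = actM (f x) a + actM (sum f F) a"
    using insert by (intro act_add[of _ n]) (auto intro: M_sum)
  finally show ?case using insert by simp
qed
lemma dM_mem: "m \<in> M n \<Longrightarrow> k = n + 1 \<Longrightarrow> dM m \<in> M k"
  using M_dg by (simp add: dg_rmodule_def)
lemma dM_add: "m \<in> M n \<Longrightarrow> m' \<in> M n \<Longrightarrow> dM (m + m') = dM m + dM m'"
  using M_dg by (simp add: dg_rmodule_def)
lemma dM_zero [simp]: "dM 0 = 0"
proof -
  have "dM (0 + 0) = dM 0 + dM 0" using dM_add[OF M_zero M_zero] .
  then show ?thesis by simp
qed
lemma dM_dM: "m \<in> M n \<Longrightarrow> dM (dM m) = 0"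
  using M_dg by (simp add: dg_rmodule_def)
lemma dM_act: "m \<in> M n \<Longrightarrow> a \<in> A q \<Longrightarrow> dM (actM m a) = actM (dM m) a + sgnpow n (actM m (dA a))"
  using M_dg by (simp add: dg_rmodule_def)

end

section \<open>Graded retracts of free modules are dg retracts of free modules\<close>

locale graded_free_retract = dg_module \<kappa> A dA M actM dM
  for \<kappa> :: "'k::comm_ring_1 \<Rightarrow> 'a::ring_1" and A dA
    and M :: "int \<Rightarrow> 'm::ab_group_add set" and actM dM +
  fixes R :: nat and deg :: "nat \<Rightarrow> int" and \<Phi> :: "'m \<Rightarrow> nat \<Rightarrow> 'a" and \<Gamma> :: "(nat \<Rightarrow> 'a) \<Rightarrow> 'm"
  assumes \<Phi>_mem: "m \<in> M n \<Longrightarrow> \<Phi> m \<in> free_comp A R deg n"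
    and \<Phi>_add: "m \<in> M n \<Longrightarrow> m' \<in> M n \<Longrightarrow> \<Phi> (m + m') = \<Phi> m + \<Phi> m'"
    and \<Phi>_act: "m \<in> M n \<Longrightarrow> a \<in> A q \<Longrightarrow> \<Phi> (actM m a) = free_act (\<Phi> m) a"
    and \<Gamma>_mem: "v \<in> free_comp A R deg n \<Longrightarrow> \<Gamma> v \<in> M n"
    and \<Gamma>_add: "v \<in> free_comp A R deg n \<Longrightarrow> w \<in> free_comp A R deg n \<Longrightarrow> \<Gamma> (v + w) = \<Gamma> v + \<Gamma> w"
    and \<Gamma>_act: "v \<in> free_comp A R deg n \<Longrightarrow> a \<in> A q \<Longrightarrow> \<Gamma> (free_act v a) = actM (\<Gamma> v) a"
    and \<Gamma>\<Phi>: "m \<in> M n \<Longrightarrow> \<Gamma> (\<Phi> m) = m"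
begin

abbreviation P where "P n \<equiv> free_comp A R deg n"

lemma \<Phi>_zero [simp]: "\<Phi> 0 = 0"
proof -
  have "\<Phi> (0 + 0) = \<Phi> 0 + \<Phi> 0" using \<Phi>_add[OF M_zero M_zero] .
  then show ?thesis by simp
qed
lemma \<Phi>_neg: "m \<in> M n \<Longrightarrow> \<Phi> (- m) = - \<Phi> m"
  by (metis \<Phi>_add M_neg \<Phi>_zero add.right_inverse add_eq_0_iff)
lemma \<Phi>_diff: "m \<in> M n \<Longrightarrow> m' \<in> M n \<Longrightarrow> \<Phi> (m - m') = \<Phi> m - \<Phi> m'"
  by (metis \<Phi>_add M_neg \<Phi>_neg diff_conv_add_uminus)
lemma \<Phi>_sgnpow: "m \<in> M n \<Longrightarrow> \<Phi> (sgnpow k m) = sgnpow k (\<Phi> m)"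
  by (simp add: sgnpow_def \<Phi>_neg)
lemma \<Gamma>_zero [simp]: "\<Gamma> 0 = 0"
proof -
  have "\<Gamma> (0 + 0) = \<Gamma> 0 + \<Gamma> 0" using \<Gamma>_add[OF free_comp_zero free_comp_zero] .
  then show ?thesis by simp
qed
lemma \<Gamma>_neg: "v \<in> P n \<Longrightarrow> \<Gamma> (- v) = - \<Gamma> v"
  by (metis \<Gamma>_add free_comp_neg \<Gamma>_zero add.right_inverse add_eq_0_iff)
lemma \<Gamma>_diff: "v \<in> P n \<Longrightarrow> w \<in> P n \<Longrightarrow> \<Gamma> (v - w) = \<Gamma> v - \<Gamma> w"
  by (metis \<Gamma>_add free_comp_neg \<Gamma>_neg diff_conv_add_uminus)

text \<open>\<open>proj\<close> is the idempotent \<open>e\<close> and \<open>conn\<close> the connection \<open>\<nabla>\<close> above,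
  split into the parts landing in the image and the kernel of \<open>e\<close>.\<close>

definition proj where "proj v = \<Phi> (\<Gamma> v)"
definition coproj where "coproj v = v - proj v"
definition conn_img where "conn_img v = \<Phi> (dM (\<Gamma> v))"
definition conn_ker where "conn_ker v = coproj (free_diff R deg (coproj v))"
definition conn where "conn v = conn_img v + conn_ker v"

lemma proj_mem: "v \<in> P n \<Longrightarrow> proj v \<in> P n"
  by (simp add: proj_def \<Phi>_mem \<Gamma>_mem)
lemma proj_add: "v \<in> P n \<Longrightarrow> w \<in> P n \<Longrightarrow> proj (v + w) = proj v + proj w"
  by (simp add: proj_def \<Gamma>_add \<Phi>_add[OF \<Gamma>_mem \<Gamma>_mem])
lemma proj_zero [simp]: "proj 0 = 0"
  by (simp add: proj_def)
lemma proj_neg: "v \<in> P n \<Longrightarrow> proj (- v) = - proj v"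
  by (simp add: proj_def \<Gamma>_neg \<Phi>_neg[OF \<Gamma>_mem])
lemma proj_diff: "v \<in> P n \<Longrightarrow> w \<in> P n \<Longrightarrow> proj (v - w) = proj v - proj w"
  by (simp add: proj_def \<Gamma>_diff \<Phi>_diff[OF \<Gamma>_mem \<Gamma>_mem])
lemma proj_act: "v \<in> P n \<Longrightarrow> a \<in> A q \<Longrightarrow> proj (free_act v a) = free_act (proj v) a"
  by (simp add: proj_def \<Gamma>_act \<Phi>_act[OF \<Gamma>_mem])
lemma \<Gamma>_proj: "v \<in> P n \<Longrightarrow> \<Gamma> (proj v) = \<Gamma> v"
  by (simp add: proj_def \<Gamma>\<Phi>[OF \<Gamma>_mem])
lemma proj_proj: "v \<in> P n \<Longrightarrow> proj (proj v) = proj v"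
  by (simp add: proj_def \<Gamma>\<Phi>[OF \<Gamma>_mem])
lemma proj_\<Phi>: "m \<in> M n \<Longrightarrow> proj (\<Phi> m) = \<Phi> m"
  by (simp add: proj_def \<Gamma>\<Phi>)

lemma coproj_mem: "v \<in> P n \<Longrightarrow> coproj v \<in> P n"
  by (simp add: coproj_def free_comp_diff proj_mem)
lemma coproj_add: "v \<in> P n \<Longrightarrow> w \<in> P n \<Longrightarrow> coproj (v + w) = coproj v + coproj w"
  by (simp add: coproj_def proj_add)
lemma coproj_zero [simp]: "coproj 0 = 0"
  by (simp add: coproj_def)
lemma coproj_neg: "v \<in> P n \<Longrightarrow> coproj (- v) = - coproj v"
  by (simp add: coproj_def proj_neg)
lemma coproj_diff: "v \<in> P n \<Longrightarrow> w \<in> P n \<Longrightarrow> coproj (v - w) = coproj v - coproj w"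
  by (simp add: coproj_def proj_diff)
lemma coproj_act: "v \<in> P n \<Longrightarrow> a \<in> A q \<Longrightarrow> coproj (free_act v a) = free_act (coproj v) a"
  by (simp add: coproj_def proj_act free_act_diff)
lemma proj_coproj: "v \<in> P n \<Longrightarrow> proj (coproj v) = 0"
  by (simp add: coproj_def proj_diff proj_mem proj_proj)
lemma coproj_proj: "v \<in> P n \<Longrightarrow> coproj (proj v) = 0"
  by (simp add: coproj_def proj_proj)
lemma coproj_coproj: "v \<in> P n \<Longrightarrow> coproj (coproj v) = coproj v"
  by (simp add: coproj_def proj_diff proj_mem proj_proj)
lemma \<Gamma>_coproj: "v \<in> P n \<Longrightarrow> \<Gamma> (coproj v) = 0"
  by (simp add: coproj_def \<Gamma>_diff proj_mem \<Gamma>_proj)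
lemma proj_plus_coproj: "proj v + coproj v = v"
  by (simp add: coproj_def)

lemma coproj_sgnpow: "v \<in> P n \<Longrightarrow> coproj (sgnpow k v) = sgnpow k (coproj v)"
  by (simp add: sgnpow_def coproj_neg)

lemma conn_img_mem: "v \<in> P n \<Longrightarrow> k = n + 1 \<Longrightarrow> conn_img v \<in> P k"
  unfolding conn_img_def by (rule \<Phi>_mem, rule dM_mem, rule \<Gamma>_mem)
lemma conn_img_zero [simp]: "conn_img 0 = 0"
  by (simp add: conn_img_def)
lemma conn_img_add: "v \<in> P n \<Longrightarrow> w \<in> P n \<Longrightarrow> conn_img (v + w) = conn_img v + conn_img w"
  unfolding conn_img_def
  by (simp add: \<Gamma>_add dM_add[OF \<Gamma>_mem \<Gamma>_mem] \<Phi>_add[OF dM_mem[OF \<Gamma>_mem] dM_mem[OF \<Gamma>_mem]])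
lemma conn_img_act: "v \<in> P n \<Longrightarrow> a \<in> A q \<Longrightarrow>
   conn_img (free_act v a) = free_act (conn_img v) a + sgnpow n (free_act (proj v) (dA a))"
proof -
  assume v: "v \<in> P n" and a: "a \<in> A q"
  have m: "\<Gamma> v \<in> M n" using \<Gamma>_mem[OF v] .
  have dm: "dM (\<Gamma> v) \<in> M (n + 1)" using dM_mem[OF m] by simp
  have 1: "actM (dM (\<Gamma> v)) a \<in> M (n + q + 1)" by (rule act_mem[OF dm a]) simp
  have 2: "sgnpow n (actM (\<Gamma> v) (dA a)) \<in> M (n + q + 1)"
    using act_mem[OF m dA_mem[OF a HOL.refl]] by (simp add: sgnpow_mem M_sub add.assoc)
  have "conn_img (free_act v a) = \<Phi> (actM (dM (\<Gamma> v)) a + sgnpow n (actM (\<Gamma> v) (dA a)))"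
    by (simp add: conn_img_def \<Gamma>_act[OF v a] dM_act[OF m a])
  also have "\<dots> = \<Phi> (actM (dM (\<Gamma> v)) a) + \<Phi> (sgnpow n (actM (\<Gamma> v) (dA a)))"
    using \<Phi>_add[OF 1 2] .
  also have "\<dots> = free_act (conn_img v) a + sgnpow n (free_act (proj v) (dA a))"
    using \<Phi>_act[OF dm a] \<Phi>_sgnpow[OF act_mem[OF m dA_mem[OF a HOL.refl] HOL.refl]]
      \<Phi>_act[OF m dA_mem[OF a HOL.refl]]
    by (simp add: conn_img_def proj_def)
  finally show ?thesis .
qed
lemma conn_img_proj: "v \<in> P n \<Longrightarrow> conn_img (proj v) = conn_img v"
  by (simp add: conn_img_def \<Gamma>_proj)
lemma proj_conn_img: "v \<in> P n \<Longrightarrow> proj (conn_img v) = conn_img v"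
  by (simp add: conn_img_def proj_\<Phi>[OF dM_mem[OF \<Gamma>_mem HOL.refl]])
lemma conn_img_conn_img: "v \<in> P n \<Longrightarrow> conn_img (conn_img v) = 0"
  by (simp add: conn_img_def \<Gamma>\<Phi>[OF dM_mem[OF \<Gamma>_mem HOL.refl]] dM_dM[OF \<Gamma>_mem])

lemma conn_ker_mem: "v \<in> P n \<Longrightarrow> k = n + 1 \<Longrightarrow> conn_ker v \<in> P k"
  unfolding conn_ker_def by (rule coproj_mem, rule free_diff_mem, rule coproj_mem)
lemma conn_ker_zero [simp]: "conn_ker 0 = 0"
  by (simp add: conn_ker_def)
lemma conn_ker_add: "v \<in> P n \<Longrightarrow> w \<in> P n \<Longrightarrow> conn_ker (v + w) = conn_ker v + conn_ker w"
  unfolding conn_ker_def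
  by (simp add: coproj_add free_diff_add[OF coproj_mem coproj_mem] coproj_add[OF free_diff_mem[OF coproj_mem HOL.refl] free_diff_mem[OF coproj_mem HOL.refl]])
lemma conn_ker_act: "v \<in> P n \<Longrightarrow> a \<in> A q \<Longrightarrow>
   conn_ker (free_act v a) = free_act (conn_ker v) a + sgnpow n (free_act (coproj v) (dA a))"
proof -
  assume v: "v \<in> P n" and a: "a \<in> A q"
  have e: "coproj v \<in> P n" using coproj_mem[OF v] .
  have de: "free_diff R deg (coproj v) \<in> P (n + 1)" using free_diff_mem[OF e HOL.refl] .
  have 1: "free_act (free_diff R deg (coproj v)) a \<in> P (n + q + 1)" by (rule free_comp_act[OF de a]) simp
  have 2: "sgnpow n (free_act (coproj v) (dA a)) \<in> P (n + q + 1)"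
    using free_comp_act[OF e dA_mem[OF a HOL.refl]] by (simp add: free_comp_sgnpow add.assoc)
  have 3: "free_act (coproj v) (dA a) \<in> P (n + q + 1)"
    using free_comp_act[OF e dA_mem[OF a HOL.refl]] by (simp add: add.assoc)
  have "conn_ker (free_act v a) = coproj (free_act (free_diff R deg (coproj v)) a + sgnpow n (free_act (coproj v) (dA a)))"
    by (simp add: conn_ker_def coproj_act[OF v a] free_diff_act[OF e a])
  also have "\<dots> = coproj (free_act (free_diff R deg (coproj v)) a) + coproj (sgnpow n (free_act (coproj v) (dA a)))"
    using coproj_add[OF 1 2] .
  also have "\<dots> = free_act (conn_ker v) a + sgnpow n (free_act (coproj v) (dA a))"
    using coproj_act[OF de a] coproj_sgnpow[OF 3] coproj_act[OF e dA_mem[OF a HOL.refl]] coproj_coproj[OF v]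
    by (simp add: conn_ker_def)
  finally show ?thesis .
qed
lemma conn_ker_proj: "v \<in> P n \<Longrightarrow> conn_ker (proj v) = 0"
  by (simp add: conn_ker_def coproj_proj)
lemma proj_conn_ker: "v \<in> P n \<Longrightarrow> proj (conn_ker v) = 0"
  by (simp add: conn_ker_def proj_coproj[OF free_diff_mem[OF coproj_mem HOL.refl]])

lemma conn_mem: "v \<in> P n \<Longrightarrow> k = n + 1 \<Longrightarrow> conn v \<in> P k"
  unfolding conn_def by (rule free_comp_add, (rule conn_img_mem conn_ker_mem; assumption)+)
lemma conn_zero [simp]: "conn 0 = 0"
  by (simp add: conn_def)
lemma conn_add: "v \<in> P n \<Longrightarrow> w \<in> P n \<Longrightarrow> conn (v + w) = conn v + conn w"
  by (simp add: conn_def conn_img_add conn_ker_add)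
lemma conn_neg: "v \<in> P n \<Longrightarrow> conn (- v) = - conn v"
proof -
  assume v: "v \<in> P n"
  have "conn (v + - v) = conn v + conn (- v)" by (rule conn_add[OF v free_comp_neg[OF v]])
  then show ?thesis by (simp add: eq_neg_iff_add_eq_0 add.commute)
qed
lemma conn_diff: "v \<in> P n \<Longrightarrow> w \<in> P n \<Longrightarrow> conn (v - w) = conn v - conn w"
proof -
  assume v: "v \<in> P n" and w: "w \<in> P n"
  have "conn (v + - w) = conn v + conn (- w)" by (rule conn_add[OF v free_comp_neg[OF w]])
  then show ?thesis by (simp add: conn_neg[OF w])
qed
lemma conn_sgnpow: "v \<in> P n \<Longrightarrow> conn (sgnpow k v) = sgnpow k (conn v)"
  by (simp add: sgnpow_def conn_neg)
lemma conn_act: "v \<in> P n \<Longrightarrow> a \<in> A q \<Longrightarrow>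
   conn (free_act v a) = free_act (conn v) a + sgnpow n (free_act v (dA a))"
proof -
  assume v: "v \<in> P n" and a: "a \<in> A q"
  have "conn (free_act v a) = free_act (conn_img v) a + free_act (conn_ker v) a +
      sgnpow n (free_act (proj v) (dA a) + free_act (coproj v) (dA a))"
    by (simp add: conn_def conn_img_act[OF v a] conn_ker_act[OF v a] sgnpow_add)
  also have "\<dots> = free_act (conn v) a + sgnpow n (free_act v (dA a))"
    by (simp add: conn_def free_act_add[symmetric] proj_plus_coproj)
  finally show ?thesis .
qed
lemma proj_conn: "v \<in> P n \<Longrightarrow> proj (conn v) = conn_img v"
  by (simp add: conn_def proj_add[OF conn_img_mem[OF _ HOL.refl] conn_ker_mem[OF _ HOL.refl]] proj_conn_img proj_conn_ker)
lemma conn_proj: "v \<in> P n \<Longrightarrow> conn (proj v) = conn_img v"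
  by (simp add: conn_def conn_img_proj conn_ker_proj)
lemma conn_coproj: "v \<in> P n \<Longrightarrow> conn (coproj v) = coproj (conn v)"
  by (simp add: coproj_def conn_diff[OF _ proj_mem] conn_proj proj_conn)
lemma conn_\<Phi>: "m \<in> M n \<Longrightarrow> conn (\<Phi> m) = \<Phi> (dM m)"
  by (simp add: conn_def conn_img_def \<Gamma>\<Phi> conn_ker_def coproj_def proj_\<Phi>)
lemma \<Gamma>_conn: "v \<in> P n \<Longrightarrow> \<Gamma> (conn v) = dM (\<Gamma> v)"
proof -
  assume v: "v \<in> P n"
  have "\<Gamma> (conn v) = \<Gamma> (conn_img v) + \<Gamma> (conn_ker v)"
    unfolding conn_def using \<Gamma>_add[OF conn_img_mem[OF v HOL.refl] conn_ker_mem[OF v HOL.refl]] .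
  also have "\<Gamma> (conn_ker v) = 0"
    unfolding conn_ker_def by (rule \<Gamma>_coproj[OF free_diff_mem[OF coproj_mem[OF v] HOL.refl]])
  also have "\<Gamma> (conn_img v) = dM (\<Gamma> v)"
    by (simp add: conn_img_def \<Gamma>\<Phi>[OF dM_mem[OF \<Gamma>_mem[OF v] HOL.refl]])
  finally show ?thesis by simp
qed
lemma proj_conn_conn: "v \<in> P n \<Longrightarrow> proj (conn (conn v)) = 0"
proof -
  assume v: "v \<in> P n"
  have w: "conn v \<in> P (n + 1)" using conn_mem[OF v HOL.refl] .
  have "proj (conn (conn v)) = conn_img (conn v)" using proj_conn[OF w] .
  also have "\<dots> = conn_img (proj (conn v))" using conn_img_proj[OF w] by simp
  also have "\<dots> = conn_img (conn_img v)" using proj_conn[OF v] by simp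
  also have "\<dots> = 0" using conn_img_conn_img[OF v] .
  finally show ?thesis .
qed
lemma coproj_conn_conn: "v \<in> P n \<Longrightarrow> coproj (conn (conn v)) = conn (conn v)"
  by (simp add: coproj_def proj_conn_conn)

definition cone_deg :: "nat \<Rightarrow> int" where
  "cone_deg i = (if i < R then deg i else deg (i - R) - 1)"
abbreviation cone where "cone n \<equiv> free_comp A (2 * R) cone_deg n"
definition cone_fst :: "(nat \<Rightarrow> 'a) \<Rightarrow> nat \<Rightarrow> 'a" where
  "cone_fst v = (\<lambda>i. if i < R then v i else 0)"
definition cone_snd :: "(nat \<Rightarrow> 'a) \<Rightarrow> nat \<Rightarrow> 'a" where
  "cone_snd v = (\<lambda>i. if i < R then v (i + R) else 0)"
definition cone_pair :: "(nat \<Rightarrow> 'a) \<Rightarrow> (nat \<Rightarrow> 'a) \<Rightarrow> nat \<Rightarrow> 'a" where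
  "cone_pair x y = (\<lambda>i. if i < R then x i else if i < 2 * R then y (i - R) else 0)"

lemma cone_fst_mem: "v \<in> cone n \<Longrightarrow> cone_fst v \<in> P n"
proof -
  assume v: "v \<in> cone n"
  have "v i \<in> A (n - deg i)" if "i < R" for i using free_comp_in[OF v, of i] that by (simp add: cone_deg_def)
  then show ?thesis by (simp add: free_comp_iff cone_fst_def)
qed
lemma cone_snd_mem: "v \<in> cone n \<Longrightarrow> k = n + 1 \<Longrightarrow> cone_snd v \<in> P k"
proof -
  assume v: "v \<in> cone n" and k: "k = n + 1"
  have "v (i + R) \<in> A (k - deg i)" if "i < R" for i
    using free_comp_in[OF v, of "i + R"] that k by (simp add: cone_deg_def algebra_simps)
  then show ?thesis by (simp add: free_comp_iff cone_snd_def)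
qed
lemma cone_pair_mem: "x \<in> P n \<Longrightarrow> y \<in> P (n + 1) \<Longrightarrow> cone_pair x y \<in> cone n"
  by (auto simp: free_comp_iff cone_pair_def cone_deg_def algebra_simps)
lemma cone_fst_pair: "x \<in> P n \<Longrightarrow> cone_fst (cone_pair x y) = x"
  by (auto simp: fun_eq_iff free_comp_iff cone_pair_def cone_fst_def)
lemma cone_snd_pair: "y \<in> P k \<Longrightarrow> cone_snd (cone_pair x y) = y"
  by (auto simp: fun_eq_iff free_comp_iff cone_pair_def cone_snd_def)
lemma cone_pair_fst_snd: "v \<in> cone n \<Longrightarrow> cone_pair (cone_fst v) (cone_snd v) = v"
  by (auto simp: fun_eq_iff free_comp_iff cone_pair_def cone_snd_def cone_fst_def)
lemma cone_fst_add: "cone_fst (v + w) = cone_fst v + cone_fst w"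
  by (auto simp: fun_eq_iff cone_fst_def)
lemma cone_snd_add: "cone_snd (v + w) = cone_snd v + cone_snd w"
  by (auto simp: fun_eq_iff cone_snd_def)
lemma cone_fst_act: "cone_fst (free_act v a) = free_act (cone_fst v) a"
  by (auto simp: fun_eq_iff cone_fst_def free_act_def)
lemma cone_snd_act: "cone_snd (free_act v a) = free_act (cone_snd v) a"
  by (auto simp: fun_eq_iff cone_snd_def free_act_def)
lemma cone_pair_add: "cone_pair (x + x') (y + y') = cone_pair x y + cone_pair x' y'"
  by (auto simp: fun_eq_iff cone_pair_def)
lemma cone_pair_act: "cone_pair (free_act x a) (free_act y a) = free_act (cone_pair x y) a"
  by (auto simp: fun_eq_iff cone_pair_def free_act_def)
lemma cone_pair_sgnpow: "cone_pair (sgnpow k x) (sgnpow k y) = sgnpow k (cone_pair x y)"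
  by (auto simp: fun_eq_iff cone_pair_def sgnpow_def)
lemma cone_pair_zero [simp]: "cone_pair 0 0 = 0"
  by (auto simp: fun_eq_iff cone_pair_def)

text \<open>\<open>cone_diff\<close> squares to zero because \<open>\<nabla>\<close> commutes with \<open>1 - e\<close> and \<open>e \<nabla>\<^sup>2 = 0\<close>.\<close>

definition cone_diff where
  "cone_diff v = cone_pair (conn (cone_fst v) + coproj (cone_snd v)) (- conn (conn (cone_fst v)) - conn (cone_snd v))"

lemma cone_diff_mem: "v \<in> cone n \<Longrightarrow> k = n + 1 \<Longrightarrow> cone_diff v \<in> cone k"
proof -
  assume v: "v \<in> cone n" and k: "k = n + 1"
  have x: "cone_fst v \<in> P n" using cone_fst_mem[OF v] .
  have y: "cone_snd v \<in> P (n + 1)" using cone_snd_mem[OF v HOL.refl] .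
  show ?thesis unfolding cone_diff_def k
    by (intro cone_pair_mem free_comp_add free_comp_diff free_comp_neg conn_mem[OF x HOL.refl] coproj_mem[OF y] conn_mem[OF conn_mem[OF x HOL.refl] HOL.refl]
        conn_mem[OF y HOL.refl])
qed

lemma cone_diff_add: "v \<in> cone n \<Longrightarrow> w \<in> cone n \<Longrightarrow> cone_diff (v + w) = cone_diff v + cone_diff w"
proof -
  assume v: "v \<in> cone n" and w: "w \<in> cone n"
  have x: "cone_fst v \<in> P n" "cone_fst w \<in> P n" using cone_fst_mem v w by auto
  have y: "cone_snd v \<in> P (n + 1)" "cone_snd w \<in> P (n + 1)" using cone_snd_mem v w by auto
  have 1: "conn (cone_fst (v + w)) = conn (cone_fst v) + conn (cone_fst w)"
    by (simp add: cone_fst_add conn_add[OF x])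
  have 2: "conn (conn (cone_fst v) + conn (cone_fst w)) = conn (conn (cone_fst v)) + conn (conn (cone_fst w))"
    by (simp add: conn_add[OF conn_mem[OF x(1) HOL.refl] conn_mem[OF x(2) HOL.refl]])
  have 3: "conn (cone_snd (v + w)) = conn (cone_snd v) + conn (cone_snd w)"
    by (simp add: cone_snd_add conn_add[OF y])
  have 4: "coproj (cone_snd (v + w)) = coproj (cone_snd v) + coproj (cone_snd w)"
    by (simp add: cone_snd_add coproj_add[OF y])
  show ?thesis unfolding cone_diff_def 1 2 3 4 cone_pair_add[symmetric]
    by (simp add: algebra_simps)
qed

lemma cone_diff_pair:
  "x \<in> P n \<Longrightarrow> y \<in> P (n + 1) \<Longrightarrow>
    cone_diff (cone_pair x y) = cone_pair (conn x + coproj y) (- conn (conn x) - conn y)"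
  by (simp add: cone_diff_def cone_fst_pair cone_snd_pair)

lemma cone_diff_cone_diff:
  assumes v: "v \<in> cone n"
  shows "cone_diff (cone_diff v) = 0"
proof -
  define x y where "x = cone_fst v" and "y = cone_snd v"
  have x: "x \<in> P n" and y: "y \<in> P (n + 1)"
    using cone_fst_mem[OF v] cone_snd_mem[OF v HOL.refl] by (simp_all add: x_def y_def)
  have nx: "conn x \<in> P (n + 1)" and nnx: "conn (conn x) \<in> P (n + 1 + 1)"
    and ny: "conn y \<in> P (n + 1 + 1)" and ey: "coproj y \<in> P (n + 1)"
    using conn_mem[OF x HOL.refl] conn_mem[OF conn_mem[OF x HOL.refl] HOL.refl]
      conn_mem[OF y HOL.refl] coproj_mem[OF y] by simp_all
  have x': "conn x + coproj y \<in> P (n + 1)" and y': "- conn (conn x) - conn y \<in> P (n + 1 + 1)"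
    using free_comp_add[OF nx ey] free_comp_diff[OF free_comp_neg[OF nnx] ny] .
  have a: "conn (conn x + coproj y) = conn (conn x) + coproj (conn y)"
    by (simp add: conn_add[OF nx ey] conn_coproj[OF y])
  have b: "coproj (- conn (conn x) - conn y) = - conn (conn x) - coproj (conn y)"
    by (simp add: coproj_diff[OF free_comp_neg[OF nnx] ny] coproj_neg[OF nnx] coproj_conn_conn[OF x])
  have c: "conn (conn (conn x) + coproj (conn y)) = conn (conn (conn x)) + coproj (conn (conn y))"
    by (simp add: conn_add[OF nnx coproj_mem[OF ny]] conn_coproj[OF ny])
  have d: "conn (- conn (conn x) - conn y) = - conn (conn (conn x)) - conn (conn y)"
    by (simp add: conn_diff[OF free_comp_neg[OF nnx] ny] conn_neg[OF nnx])
  have "cone_diff (cone_diff v) = cone_diff (cone_pair (conn x + coproj y) (- conn (conn x) - conn y))"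
    by (simp add: cone_diff_def x_def y_def)
  also have "\<dots> = 0"
    using cone_diff_pair[OF x' y'] a b c d coproj_conn_conn[OF y] by simp
  finally show ?thesis .
qed

lemma conn_conn_act:
  assumes x: "x \<in> P n" and a: "a \<in> A q"
  shows "conn (conn (free_act x a)) = free_act (conn (conn x)) a"
proof -
  have nx: "conn x \<in> P (n + 1)" and da: "dA a \<in> A (q + 1)"
    using conn_mem[OF x HOL.refl] dA_mem[OF a HOL.refl] .
  have m1: "free_act (conn x) a \<in> P (n + q + 1)"
    by (rule free_comp_act[OF nx a]) simp
  have m2: "free_act x (dA a) \<in> P (n + q + 1)"
    by (rule free_comp_act[OF x da]) simp
  have "conn (conn (free_act x a)) = conn (free_act (conn x) a) + sgnpow n (conn (free_act x (dA a)))"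
    by (simp add: conn_act[OF x a] conn_add[OF m1 free_comp_sgnpow[OF m2]] conn_sgnpow[OF m2])
  also have "\<dots> = free_act (conn (conn x)) a"
    using conn_act[OF nx a] conn_act[OF x da] dA_dA[OF a] by (simp add: sgnpow_succ)
  finally show ?thesis .
qed

lemma cone_diff_act:
  assumes v: "v \<in> cone n" and a: "a \<in> A q"
  shows "cone_diff (free_act v a) = free_act (cone_diff v) a + sgnpow n (free_act v (dA a))"
proof -
  define x y where "x = cone_fst v" and "y = cone_snd v"
  have x: "x \<in> P n" and y: "y \<in> P (n + 1)"
    using cone_fst_mem[OF v] cone_snd_mem[OF v HOL.refl] by (simp_all add: x_def y_def)
  have "cone_diff (free_act v a) = cone_pair (conn (free_act x a) + coproj (free_act y a))
      (- conn (conn (free_act x a)) - conn (free_act y a))"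
    by (simp add: cone_diff_def cone_fst_act cone_snd_act x_def y_def)
  also have "\<dots> = cone_pair (free_act (conn x + coproj y) a) (free_act (- conn (conn x) - conn y) a)
      + cone_pair (sgnpow n (free_act x (dA a))) (sgnpow n (free_act y (dA a)))"
    unfolding conn_conn_act[OF x a]
    by (simp add: conn_act[OF x a] conn_act[OF y a] coproj_act[OF y a]
        cone_pair_add[symmetric] free_act_add free_act_diff free_act_minus sgnpow_succ sgnpow_succ' algebra_simps)
  also have "\<dots> = free_act (cone_diff v) a + sgnpow n (free_act v (dA a))"
    by (simp add: cone_pair_act cone_pair_sgnpow cone_diff_def x_def y_def cone_pair_fst_snd[OF v])
  finally show ?thesis .
qed

definition cone_in where "cone_in m = cone_pair (\<Phi> m) 0"
definition cone_out where "cone_out v = \<Gamma> (cone_fst v)"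

lemma cone_dg_rmodule: "dg_rmodule A dA cone free_act cone_diff"
  unfolding dg_rmodule_def
  by (intro conjI free_comp_rmod allI ballI cone_diff_mem[OF _ HOL.refl] cone_diff_add cone_diff_cone_diff cone_diff_act)

lemma cone_in_dg_hom: "dg_hom A M actM dM cone free_act cone_diff cone_in"
  unfolding dg_hom_def
proof (intro conjI allI ballI)
  fix n m assume m: "m \<in> M n"
  show "cone_in m \<in> cone n" unfolding cone_in_def by (intro cone_pair_mem \<Phi>_mem[OF m] free_comp_zero)
  show "cone_in (dM m) = cone_diff (cone_in m)"
    unfolding cone_in_def
    by (simp add: cone_diff_pair[OF \<Phi>_mem[OF m] free_comp_zero] conn_\<Phi>[OF m]
        conn_\<Phi>[OF dM_mem[OF m HOL.refl]] dM_dM[OF m])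
  fix m' assume m': "m' \<in> M n"
  show "cone_in (m + m') = cone_in m + cone_in m'"
    unfolding cone_in_def by (simp add: \<Phi>_add[OF m m'] cone_pair_add[symmetric])
next
  fix n q m a assume m: "m \<in> M n" and a: "a \<in> A q"
  show "cone_in (actM m a) = free_act (cone_in m) a"
    unfolding cone_in_def by (simp add: \<Phi>_act[OF m a] cone_pair_act[symmetric])
qed

lemma cone_out_dg_hom: "dg_hom A cone free_act cone_diff M actM dM cone_out"
  unfolding dg_hom_def
proof (intro conjI allI ballI)
  fix n v assume v: "v \<in> cone n"
  show "cone_out v \<in> M n" unfolding cone_out_def by (rule \<Gamma>_mem[OF cone_fst_mem[OF v]])
  fix w assume w: "w \<in> cone n"
  show "cone_out (v + w) = cone_out v + cone_out w"
    unfolding cone_out_def by (simp add: cone_fst_add \<Gamma>_add[OF cone_fst_mem[OF v] cone_fst_mem[OF w]])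
next
  fix n v assume v: "v \<in> cone n"
  have x: "cone_fst v \<in> P n" and y: "cone_snd v \<in> P (n + 1)"
    using cone_fst_mem[OF v] cone_snd_mem[OF v HOL.refl] .
  have "cone_out (cone_diff v) = \<Gamma> (conn (cone_fst v) + coproj (cone_snd v))"
    unfolding cone_out_def cone_diff_def
    using cone_fst_pair[OF free_comp_add[OF conn_mem[OF x HOL.refl] coproj_mem[OF y]]] by simp
  also have "\<dots> = dM (cone_out v)"
    by (simp add: \<Gamma>_add[OF conn_mem[OF x HOL.refl] coproj_mem[OF y]] \<Gamma>_conn[OF x] \<Gamma>_coproj[OF y] cone_out_def)
  finally show "cone_out (cone_diff v) = dM (cone_out v)" .
next
  fix n q v a assume v: "v \<in> cone n" and a: "a \<in> A q"
  show "cone_out (free_act v a) = actM (cone_out v) a"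
    unfolding cone_out_def by (simp add: cone_fst_act \<Gamma>_act[OF cone_fst_mem[OF v] a])
qed

lemma cone_out_cone_in: "m \<in> M n \<Longrightarrow> cone_out (cone_in m) = m"
  by (simp add: cone_out_def cone_in_def cone_fst_pair[OF \<Phi>_mem] \<Gamma>\<Phi>)

theorem retract_of_free_cone: "retract_of_free A dA M actM dM (2 * R) cone_deg cone_diff"
  unfolding retract_of_free_def
  using cone_dg_rmodule cone_in_dg_hom cone_out_dg_hom cone_out_cone_in by blast

end

section \<open>Cohesive modules are graded retracts of free modules\<close>

locale cohesive = dg_module \<kappa> A dA M actM dM
  for \<kappa> :: "'k::comm_ring_1 \<Rightarrow> 'a::ring_1" and A dA
    and M :: "int \<Rightarrow> 'm::ab_group_add set" and actM dM +
  fixes E :: "int \<Rightarrow> 'e::ab_group_add set" and actE :: "'e \<Rightarrow> 'a \<Rightarrow> 'e" and \<psi> :: "'e \<Rightarrow> 'a \<Rightarrow> 'm"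
  assumes cohesive_M: "cohesive_via A M actM E actE \<psi>"
begin

lemma E_rmod: "graded_rmod0 A E actE"
  using cohesive_M by (simp add: cohesive_via_def)
lemma E_sub: "subgrp (E p)"
  using E_rmod by (simp add: graded_rmod0_def graded_group_def)
lemma E_indep: "grade_indep E"
  using E_rmod by (simp add: graded_rmod0_def graded_group_def)
lemma E_zero [simp]: "0 \<in> E p"
  using E_sub subgrp_zero by blast
lemma E_add: "x \<in> E p \<Longrightarrow> y \<in> E p \<Longrightarrow> x + y \<in> E p"
  using E_sub subgrp_add by blast
lemma E_sum: "(\<And>i. i \<in> I \<Longrightarrow> f i \<in> E p) \<Longrightarrow> sum f I \<in> E p"
  using subgrp_sum[OF E_sub] .
lemma actE_mem: "e \<in> E p \<Longrightarrow> r \<in> A 0 \<Longrightarrow> actE e r \<in> E p"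
  using E_rmod by (simp add: graded_rmod0_def)
lemma actE_addl: "e \<in> E p \<Longrightarrow> e' \<in> E p \<Longrightarrow> r \<in> A 0 \<Longrightarrow> actE (e + e') r = actE e r + actE e' r"
  using E_rmod by (simp add: graded_rmod0_def)
lemma actE_addr: "e \<in> E p \<Longrightarrow> r \<in> A 0 \<Longrightarrow> r' \<in> A 0 \<Longrightarrow> actE e (r + r') = actE e r + actE e r'"
  using E_rmod by (simp add: graded_rmod0_def)
lemma actE_rzero: "e \<in> E p \<Longrightarrow> actE e 0 = 0"
proof -
  assume e: "e \<in> E p"
  have "actE e (0 + 0) = actE e 0 + actE e 0" using actE_addr[OF e A_zero A_zero] .
  then show ?thesis by simp
qed
lemma actE_lzero: "r \<in> A 0 \<Longrightarrow> actE 0 r = 0"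
proof -
  assume r: "r \<in> A 0"
  have "actE (0 + 0) r = actE 0 r + actE 0 r" using actE_addl[OF E_zero E_zero r] .
  then show ?thesis by simp
qed
lemma E_grades_disjoint: "e \<in> E p \<Longrightarrow> e \<in> E q \<Longrightarrow> p \<noteq> q \<Longrightarrow> e = 0"
proof -
  assume e: "e \<in> E p" "e \<in> E q" and pq: "p \<noteq> q"
  define c where "c n = (if n = p then e else - e)" for n
  have "\<forall>n\<in>{p, q}. c n \<in> E n"
    using e pq by (auto simp: c_def intro: subgrp_neg[OF E_sub])
  moreover have "sum c {p, q} = 0" using pq by (simp add: c_def)
  ultimately have "\<forall>n\<in>{p, q}. c n = 0"
    using E_indep unfolding grade_indep_def by (meson finite.emptyI finite_insert)
  then show ?thesis by (simp add: c_def)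
qed

lemma M_tensor_iso: "tensor_iso E actE A M actM \<psi>"
  using cohesive_M by (simp add: cohesive_via_def)

lemma tens_val_add_mset [simp]: "tens_val \<psi> (add_mset x X) = \<psi> (fst x) (snd x) + tens_val \<psi> X"
  by (simp add: tens_val_def)
lemma tens_val_union [simp]: "tens_val \<psi> (X + Y) = tens_val \<psi> X + tens_val \<psi> Y"
  by (simp add: tens_val_def)
lemma tens_val_empty [simp]: "tens_val \<psi> {#} = 0"
  by (simp add: tens_val_def)

lemma M_tensor: "M n = tens_val \<psi> ` tensor_part E A n"
  using M_tensor_iso by (simp add: tensor_iso_def)
lemma tens_val_iff: "X \<in> tensor_all E A \<Longrightarrow> Y \<in> tensor_all E A \<Longrightarrow>
    tens_val \<psi> X = tens_val \<psi> Y \<longleftrightarrow> tcong E actE A X Y"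
  using M_tensor_iso by (simp add: tensor_iso_def)
lemma psi_act: "e \<in> E p \<Longrightarrow> a \<in> A q \<Longrightarrow> b \<in> A s \<Longrightarrow> actM (\<psi> e a) b = \<psi> e (a * b)"
  using M_tensor_iso by (simp add: tensor_iso_def)

lemma tensor_part_all: "X \<in> tensor_part E A n \<Longrightarrow> X \<in> tensor_all E A"
  by (auto simp: tensor_part_def tensor_all_def)
lemma tensor_all_single: "e \<in> E p \<Longrightarrow> a \<in> A q \<Longrightarrow> {#(e, a)#} \<in> tensor_all E A"
  by (auto simp: tensor_all_def)
lemma tensor_all_pair: "e \<in> E p \<Longrightarrow> a \<in> A q \<Longrightarrow> e' \<in> E p' \<Longrightarrow> a' \<in> A q' \<Longrightarrow> {#(e, a), (e', a')#} \<in> tensor_all E A"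
  by (auto simp: tensor_all_def)

lemma psi_mem: "e \<in> E p \<Longrightarrow> a \<in> A q \<Longrightarrow> k = p + q \<Longrightarrow> \<psi> e a \<in> M k"
proof -
  assume e: "e \<in> E p" and a: "a \<in> A q" and k: "k = p + q"
  have "{#(e, a)#} \<in> tensor_part E A k" using e a k by (auto simp: tensor_part_def)
  then have "tens_val \<psi> {#(e, a)#} \<in> M k" unfolding M_tensor by blast
  then show ?thesis by simp
qed

lemma psi_add_left: "e \<in> E p \<Longrightarrow> e' \<in> E p \<Longrightarrow> a \<in> A q \<Longrightarrow> \<psi> (e + e') a = \<psi> e a + \<psi> e' a"
proof -
  assume e: "e \<in> E p" and e': "e' \<in> E p" and a: "a \<in> A q"
  have "tcong E actE A {#(e + e', a)#} {#(e, a), (e', a)#}" using e e' a by (rule tcong.add_l)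
  then have "tens_val \<psi> {#(e + e', a)#} = tens_val \<psi> {#(e, a), (e', a)#}"
    using tens_val_iff[OF tensor_all_single[OF E_add[OF e e'] a] tensor_all_pair[OF e a e' a]] by blast
  then show ?thesis by simp
qed
lemma psi_add_right: "e \<in> E p \<Longrightarrow> a \<in> A q \<Longrightarrow> a' \<in> A q \<Longrightarrow> \<psi> e (a + a') = \<psi> e a + \<psi> e a'"
proof -
  assume e: "e \<in> E p" and a: "a \<in> A q" and a': "a' \<in> A q"
  have "tcong E actE A {#(e, a + a')#} {#(e, a), (e, a')#}" using e a a' by (rule tcong.add_r)
  then have "tens_val \<psi> {#(e, a + a')#} = tens_val \<psi> {#(e, a), (e, a')#}"
    using tens_val_iff[OF tensor_all_single[OF e A_add[OF a a']] tensor_all_pair[OF e a e a']] by blast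
  then show ?thesis by simp
qed
lemma psi_zero_left: "a \<in> A q \<Longrightarrow> \<psi> 0 a = 0"
proof -
  assume a: "a \<in> A q"
  have "tcong E actE A {#(0, a)#} {#}" using a by (rule tcong.zero_l)
  then have "tens_val \<psi> {#(0, a)#} = tens_val \<psi> {#}"
    using tens_val_iff[OF tensor_all_single[OF E_zero a], of "{#}"] by (simp add: tensor_all_def)
  then show ?thesis by simp
qed
lemma psi_zero_right: "e \<in> E p \<Longrightarrow> \<psi> e 0 = 0"
proof -
  assume e: "e \<in> E p"
  have "tcong E actE A {#(e, 0)#} {#}" using e by (rule tcong.zero_r)
  then have "tens_val \<psi> {#(e, 0)#} = tens_val \<psi> {#}"
    using tens_val_iff[OF tensor_all_single[OF e A_zero[of 0]], of "{#}"] by (simp add: tensor_all_def)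
  then show ?thesis by simp
qed
lemma psi_bal: "e \<in> E p \<Longrightarrow> r \<in> A 0 \<Longrightarrow> a \<in> A q \<Longrightarrow> \<psi> (actE e r) a = \<psi> e (r * a)"
proof -
  assume e: "e \<in> E p" and r: "r \<in> A 0" and a: "a \<in> A q"
  have "tcong E actE A {#(actE e r, a)#} {#(e, r * a)#}" using e r a by (rule tcong.bal)
  then have "tens_val \<psi> {#(actE e r, a)#} = tens_val \<psi> {#(e, r * a)#}"
    using tens_val_iff[OF tensor_all_single[OF actE_mem[OF e r] a] tensor_all_single[OF e A_mult[OF r a HOL.refl]]] by blast
  then show ?thesis by simp
qed
lemma psi_sum_left: "finite I \<Longrightarrow> (\<And>i. i \<in> I \<Longrightarrow> f i \<in> E p) \<Longrightarrow> a \<in> A q \<Longrightarrow>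
    \<psi> (sum f I) a = (\<Sum>i\<in>I. \<psi> (f i) a)"
proof (induction I rule: finite_induct)
  case empty
  then show ?case by (simp add: psi_zero_left)
next
  case (insert x F)
  have fx: "f x \<in> E p" using insert by simp
  have fF: "sum f F \<in> E p" using insert by (intro E_sum) simp
  have "\<psi> (sum f (insert x F)) a = \<psi> (f x + sum f F) a" using insert by simp
  also have "\<dots> = \<psi> (f x) a + \<psi> (sum f F) a" by (rule psi_add_left[OF fx fF insert(5)])
  finally show ?case using insert by simp
qed

lemma E_bounded: "\<exists>bnd::nat. \<forall>p. int bnd < \<bar>p\<bar> \<longrightarrow> E p = {0}"
proof -
  obtain N where "\<forall>p. N < \<bar>p\<bar> \<longrightarrow> E p = {0}"
    using cohesive_M by (auto simp: cohesive_via_def bounded_graded_def)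
  moreover have "N \<le> int (nat N)"
    by simp
  ultimately show ?thesis
    by (meson le_less_trans)
qed

lemma E_proj_data: "\<exists>r \<iota> \<pi>. fg_proj_data A (E p) actE r \<iota> \<pi>"
  using cohesive_M by (simp add: cohesive_via_def fg_projective_iff)

lemma M_tensor_repr: "m \<in> M n \<Longrightarrow> \<exists>X\<in>tensor_part E A n. tens_val \<psi> X = m"
  using M_tensor by auto

end

text \<open>\<open>E\<close> together with generators \<open>gen i\<close> of degree \<open>deg i\<close> and \<open>A\<^sup>0\<close>-linear coordinate maps
  \<open>coord\<close>: this makes \<open>E\<close> a graded retract of the free \<open>A\<^sup>0\<close>-module of rank \<open>R\<close>.\<close>

locale cohesive_frame = cohesive \<kappa> A dA M actM dM E actE \<psi>
  for \<kappa> :: "'k::comm_ring_1 \<Rightarrow> 'a::ring_1" and A dA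
    and M :: "int \<Rightarrow> 'm::ab_group_add set" and actM dM
    and E :: "int \<Rightarrow> 'e::ab_group_add set" and actE \<psi> +
  fixes R :: nat and deg :: "nat \<Rightarrow> int" and gen :: "nat \<Rightarrow> 'e" and coord :: "'e \<Rightarrow> nat \<Rightarrow> 'a"
  assumes gen_deg: "i < R \<Longrightarrow> gen i \<in> E (deg i)"
    and coord_A0: "e \<in> E p \<Longrightarrow> coord e i \<in> A 0"
    and coord_outside: "e \<in> E p \<Longrightarrow> R \<le> i \<or> deg i \<noteq> p \<Longrightarrow> coord e i = 0"
    and coord_add: "e \<in> E p \<Longrightarrow> e' \<in> E p \<Longrightarrow> coord (e + e') = coord e + coord e'"
    and coord_act: "e \<in> E p \<Longrightarrow> r \<in> A 0 \<Longrightarrow> coord (actE e r) = free_act (coord e) r"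
    and coord_expand: "e \<in> E p \<Longrightarrow> e = (\<Sum>i\<in>{i. i < R \<and> deg i = p}. actE (gen i) (coord e i))"
begin

abbreviation P where "P n \<equiv> free_comp A R deg n"

lemma coord_zero [simp]: "coord 0 = 0"
proof -
  have "coord (0 + 0) = coord 0 + coord 0" using coord_add[OF E_zero E_zero] .
  then show ?thesis by simp
qed

definition tcoords :: "('e \<times> 'a) multiset \<Rightarrow> nat \<Rightarrow> 'a" where
  "tcoords X = sum_mset (image_mset (\<lambda>x. free_act (coord (fst x)) (snd x)) X)"

lemma tcoords_empty [simp]: "tcoords {#} = 0"
  by (simp add: tcoords_def)
lemma tcoords_add_mset [simp]: "tcoords (add_mset x X) = free_act (coord (fst x)) (snd x) + tcoords X"
  by (simp add: tcoords_def)

lemma tcoords_union [simp]: "tcoords (X + Y) = tcoords X + tcoords Y"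
  by (simp add: tcoords_def)

lemma tcoords_cong: "tcong E actE A X Y \<Longrightarrow> tcoords X = tcoords Y"
proof (induction rule: tcong.induct)
  case (add_l e p e' a q)
  then show ?case by (simp add: coord_add free_act_add)
next
  case (add_r e p a q a')
  then show ?case by (simp add: free_act_radd)
next
  case (bal e p r a q)
  then show ?case by (simp add: coord_act free_act_assoc)
qed simp_all

text \<open>\<open>coords\<close> is independent of the chosen representative by \<open>tcoords_cong\<close>.\<close>

definition coords where "coords m = tcoords (SOME X. X \<in> tensor_all E A \<and> tens_val \<psi> X = m)"
definition expand where "expand v = (\<Sum>i<R. \<psi> (gen i) (v i))"

lemma coords_eq: "X \<in> tensor_all E A \<Longrightarrow> coords (tens_val \<psi> X) = tcoords X"
proof -
  assume X: "X \<in> tensor_all E A"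
  define Y where "Y = (SOME Y. Y \<in> tensor_all E A \<and> tens_val \<psi> Y = tens_val \<psi> X)"
  have Y: "Y \<in> tensor_all E A \<and> tens_val \<psi> Y = tens_val \<psi> X"
    unfolding Y_def by (rule someI[of _ X]) (simp add: X)
  then have "tcong E actE A Y X" using tens_val_iff[OF _ X] by blast
  then have "tcoords Y = tcoords X" by (rule tcoords_cong)
  then show ?thesis by (simp add: coords_def Y_def)
qed

lemma free_act_coord_mem: "e \<in> E p \<Longrightarrow> a \<in> A q \<Longrightarrow> k = p + q \<Longrightarrow> free_act (coord e) a \<in> P k"
proof -
  assume e: "e \<in> E p" and a: "a \<in> A q" and k: "k = p + q"
  have "coord e i * a \<in> A (k - deg i)" if "i < R" for i
  proof (cases "deg i = p")
    case True
    then show ?thesis using A_mult[OF coord_A0[OF e] a] k by simp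
  next
    case False
    then show ?thesis using coord_outside[OF e] by simp
  qed
  moreover have "coord e i * a = 0" if "R \<le> i" for i using coord_outside[OF e] that by simp
  ultimately show ?thesis by (simp add: free_comp_iff free_act_def)
qed

lemma tensor_part_add_mset: "add_mset x X \<in> tensor_part E A n \<Longrightarrow> X \<in> tensor_part E A n"
  by (simp add: tensor_part_def)
lemma tensor_part_add_mset_head: "add_mset x X \<in> tensor_part E A n \<Longrightarrow> \<exists>p q. p + q = n \<and> fst x \<in> E p \<and> snd x \<in> A q"
  by (simp add: tensor_part_def)

lemma tcoords_mem: "X \<in> tensor_part E A n \<Longrightarrow> tcoords X \<in> P n"
proof (induction X rule: multiset_induct)
  case empty
  show ?case by (simp only: tcoords_empty free_comp_zero)
next
  case (add x X)
  obtain p q where pq: "p + q = n" "fst x \<in> E p" "snd x \<in> A q" using tensor_part_add_mset_head[OF add.prems] by blast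
  show ?case unfolding tcoords_add_mset by (rule free_comp_add[OF free_act_coord_mem[OF pq(2,3) pq(1)[symmetric]] add.IH[OF tensor_part_add_mset[OF add.prems]]])
qed

lemma tens_val_mem: "X \<in> tensor_part E A n \<Longrightarrow> tens_val \<psi> X \<in> M n"
  using M_tensor by auto

lemma coords_mem: "m \<in> M n \<Longrightarrow> coords m \<in> P n"
  using M_tensor_repr coords_eq tensor_part_all tcoords_mem by metis

lemma coords_add: "m \<in> M n \<Longrightarrow> m' \<in> M n \<Longrightarrow> coords (m + m') = coords m + coords m'"
proof -
  assume m: "m \<in> M n" and m': "m' \<in> M n"
  obtain X where X: "X \<in> tensor_part E A n" "tens_val \<psi> X = m" using M_tensor_repr[OF m] by blast
  obtain Y where Y: "Y \<in> tensor_part E A n" "tens_val \<psi> Y = m'" using M_tensor_repr[OF m'] by blast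
  have XY: "X + Y \<in> tensor_all E A" using X(1) Y(1) by (auto simp: tensor_part_def tensor_all_def)
  have "coords (m + m') = coords (tens_val \<psi> (X + Y))" using X Y by simp
  also have "\<dots> = tcoords X + tcoords Y" using coords_eq[OF XY] by simp
  also have "\<dots> = coords m + coords m'" using coords_eq[OF tensor_part_all[OF X(1)]] coords_eq[OF tensor_part_all[OF Y(1)]] X Y by simp
  finally show ?thesis .
qed

definition tensor_ract where "tensor_ract a X = image_mset (\<lambda>x. (fst x, snd x * a)) X"

lemma tens_val_act: "X \<in> tensor_part E A n \<Longrightarrow> a \<in> A q \<Longrightarrow> actM (tens_val \<psi> X) a = tens_val \<psi> (tensor_ract a X)"
proof (induction X rule: multiset_induct)
  case empty
  then show ?case by (simp add: tensor_ract_def act_zero)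
next
  case (add x X)
  obtain p q' where pq: "p + q' = n" "fst x \<in> E p" "snd x \<in> A q'" using tensor_part_add_mset_head[OF add.prems(1)] by blast
  have X: "X \<in> tensor_part E A n" using tensor_part_add_mset[OF add.prems(1)] .
  have "actM (tens_val \<psi> (add_mset x X)) a = actM (\<psi> (fst x) (snd x) + tens_val \<psi> X) a" by simp
  also have "\<dots> = actM (\<psi> (fst x) (snd x)) a + actM (tens_val \<psi> X) a"
    by (rule act_add[OF psi_mem[OF pq(2,3) pq(1)[symmetric]] tens_val_mem[OF X] add.prems(2)])
  also have "\<dots> = \<psi> (fst x) (snd x * a) + tens_val \<psi> (tensor_ract a X)"
    using psi_act[OF pq(2,3) add.prems(2)] add.IH[OF X add.prems(2)] by simp
  finally show ?case by (simp add: tensor_ract_def)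
qed

lemma tensor_ract_all:
  assumes X: "X \<in> tensor_all E A" and a: "a \<in> A q"
  shows "tensor_ract a X \<in> tensor_all E A"
proof -
  have "\<exists>p q'. fst x \<in> E p \<and> snd x * a \<in> A q'" if xX: "x \<in># X" for x
  proof -
    obtain p q' where "fst x \<in> E p" "snd x \<in> A q'" using X xX by (auto simp: tensor_all_def)
    moreover have "snd x * a \<in> A (q' + q)" by (rule A_mult[OF \<open>snd x \<in> A q'\<close> a HOL.refl])
    ultimately show ?thesis by blast
  qed
  then show ?thesis by (auto simp: tensor_all_def tensor_ract_def)
qed

lemma tcoords_tensor_ract: "tcoords (tensor_ract a X) = free_act (tcoords X) a"
  by (induction X rule: multiset_induct) (simp_all add: tensor_ract_def free_act_def fun_eq_iff distrib_right mult.assoc)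

lemma coords_act: "m \<in> M n \<Longrightarrow> a \<in> A q \<Longrightarrow> coords (actM m a) = free_act (coords m) a"
proof -
  assume m: "m \<in> M n" and a: "a \<in> A q"
  obtain X where X: "X \<in> tensor_part E A n" "tens_val \<psi> X = m" using M_tensor_repr[OF m] by blast
  have "coords (actM m a) = coords (tens_val \<psi> (tensor_ract a X))" using tens_val_act[OF X(1) a] X(2) by simp
  also have "\<dots> = tcoords (tensor_ract a X)" by (rule coords_eq[OF tensor_ract_all[OF tensor_part_all[OF X(1)] a]])
  also have "\<dots> = free_act (coords m) a" using coords_eq[OF tensor_part_all[OF X(1)]] X(2) by (simp add: tcoords_tensor_ract)
  finally show ?thesis .
qed

lemma expand_term_mem: "v \<in> P n \<Longrightarrow> i < R \<Longrightarrow> \<psi> (gen i) (v i) \<in> M n"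
proof -
  assume v: "v \<in> P n" and i: "i < R"
  have "gen i \<in> E (deg i)" "v i \<in> A (n - deg i)" using gen_deg free_comp_in[OF v] i by auto
  then show "\<psi> (gen i) (v i) \<in> M n"
    by (rule psi_mem) simp
qed

lemma expand_mem: "v \<in> P n \<Longrightarrow> expand v \<in> M n"
  unfolding expand_def
proof (rule M_sum)
  fix i assume v: "v \<in> P n" and i: "i \<in> {..<R}"
  have "gen i \<in> E (deg i)" "v i \<in> A (n - deg i)" using gen_deg free_comp_in[OF v] i by auto
  then show "\<psi> (gen i) (v i) \<in> M n"
    by (rule psi_mem) simp
qed

lemma expand_add: "v \<in> P n \<Longrightarrow> w \<in> P n \<Longrightarrow> expand (v + w) = expand v + expand w"
proof -
  assume v: "v \<in> P n" and w: "w \<in> P n"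
  have "\<psi> (gen i) ((v + w) i) = \<psi> (gen i) (v i) + \<psi> (gen i) (w i)" if i: "i \<in> {..<R}" for i
  proof -
    have "gen i \<in> E (deg i)" "v i \<in> A (n - deg i)" "w i \<in> A (n - deg i)" using gen_deg free_comp_in[OF v] free_comp_in[OF w] i by auto
    then show ?thesis by (simp add: psi_add_right)
  qed
  then show ?thesis unfolding expand_def by (simp add: sum.distrib[symmetric])
qed

lemma expand_act: "v \<in> P n \<Longrightarrow> a \<in> A q \<Longrightarrow> expand (free_act v a) = actM (expand v) a"
proof -
  assume v: "v \<in> P n" and a: "a \<in> A q"
  have "actM (expand v) a = (\<Sum>i<R. actM (\<psi> (gen i) (v i)) a)"
    unfolding expand_def
    by (rule act_sum[OF _ a]) (use expand_term_mem[OF v] in auto)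
  also have "\<dots> = (\<Sum>i<R. \<psi> (gen i) (v i * a))"
    by (rule sum.cong) (auto intro: psi_act[OF gen_deg free_comp_in[OF v _ HOL.refl] a])
  finally show ?thesis by (simp add: expand_def free_act_def)
qed

lemma expand_coord_act: "e \<in> E p \<Longrightarrow> a \<in> A q \<Longrightarrow> expand (free_act (coord e) a) = \<psi> e a"
proof -
  assume e: "e \<in> E p" and a: "a \<in> A q"
  define S where "S = {i. i < R \<and> deg i = p}"
  have "expand (free_act (coord e) a) = (\<Sum>i<R. \<psi> (actE (gen i) (coord e i)) a)"
    unfolding expand_def free_act_def
    by (rule sum.cong) (auto simp: psi_bal[OF gen_deg coord_A0[OF e] a])
  also have "\<dots> = (\<Sum>i\<in>S. \<psi> (actE (gen i) (coord e i)) a)"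
  proof (rule sum.mono_neutral_right)
    show "finite {..<R}" by simp
    show "S \<subseteq> {..<R}" by (auto simp: S_def)
    show "\<forall>i\<in>{..<R} - S. \<psi> (actE (gen i) (coord e i)) a = 0"
      using coord_outside[OF e] by (auto simp: S_def actE_rzero[OF gen_deg] psi_zero_left[OF a])
  qed
  also have "\<dots> = \<psi> (\<Sum>i\<in>S. actE (gen i) (coord e i)) a"
    by (rule psi_sum_left[of _ _ p, symmetric]) (auto simp: S_def intro: actE_mem[OF _ coord_A0[OF e]] gen_deg a)
  also have "\<dots> = \<psi> e a" using coord_expand[OF e] by (simp add: S_def)
  finally show ?thesis .
qed

lemma expand_tcoords: "X \<in> tensor_part E A n \<Longrightarrow> expand (tcoords X) = tens_val \<psi> X"
proof (induction X rule: multiset_induct)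
  case empty
  show ?case unfolding tcoords_empty tens_val_empty expand_def by (rule sum.neutral) (simp add: psi_zero_right[OF gen_deg])
next
  case (add x X)
  obtain p q where pq: "p + q = n" "fst x \<in> E p" "snd x \<in> A q" using tensor_part_add_mset_head[OF add.prems] by blast
  have X: "X \<in> tensor_part E A n" using tensor_part_add_mset[OF add.prems] .
  have "expand (tcoords (add_mset x X)) = expand (free_act (coord (fst x)) (snd x)) + expand (tcoords X)"
    unfolding tcoords_add_mset by (rule expand_add[OF free_act_coord_mem[OF pq(2,3) pq(1)[symmetric]] tcoords_mem[OF X]])
  then show ?case by (simp only: tens_val_add_mset expand_coord_act[OF pq(2,3)] add.IH[OF X])
qed

lemma expand_coords: "m \<in> M n \<Longrightarrow> expand (coords m) = m"
  using M_tensor_repr coords_eq tensor_part_all expand_tcoords by metis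

lemma graded_retract_coords: "graded_free_retract \<kappa> A dA M actM dM R deg coords expand"
  by (rule graded_free_retract.intro[OF dg_module_axioms])
    (unfold_locales; fact coords_mem coords_add coords_act expand_mem expand_add expand_act expand_coords)

end

locale cohesive_proj_family = cohesive \<kappa> A dA M actM dM E actE \<psi>
  for \<kappa> :: "'k::comm_ring_1 \<Rightarrow> 'a::ring_1" and A dA
    and M :: "int \<Rightarrow> 'm::ab_group_add set" and actM dM
    and E :: "int \<Rightarrow> 'e::ab_group_add set" and actE \<psi> +
  fixes bnd :: nat and rk :: "int \<Rightarrow> nat" and \<iota> :: "int \<Rightarrow> 'e \<Rightarrow> nat \<Rightarrow> 'a"
    and \<pi> :: "int \<Rightarrow> (nat \<Rightarrow> 'a) \<Rightarrow> 'e"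
  assumes bound: "int bnd < \<bar>p\<bar> \<Longrightarrow> E p = {0}"
    and data: "fg_proj_data A (E p) actE (rk p) (\<iota> p) (\<pi> p)"
begin

text \<open>The generators of the \<open>E p\<close>, \<open>\<bar>p\<bar> \<le> bnd\<close>, are laid out in \<open>2 bnd + 1\<close> blocks of length
  \<open>rank_sum\<close>, one block per degree; \<open>slot p j\<close> is the \<open>j\<close>-th slot of the block of degree \<open>p\<close>,
  and unused slots carry the generator \<open>0\<close>.\<close>

definition rank_sum where "rank_sum = (\<Sum>p\<in>{- int bnd..int bnd}. rk p)"
definition total_rank where "total_rank = (2 * bnd + 1) * rank_sum"
definition slot_deg where "slot_deg i = int (i div rank_sum) - int bnd"
definition slot_idx where "slot_idx i = i mod rank_sum"
definition slot where "slot p j = nat (p + int bnd) * rank_sum + j"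
definition gen where "gen i = (if slot_idx i < rk (slot_deg i) then \<pi> (slot_deg i) (unit_vec (slot_idx i)) else 0)"
definition coord where "coord e i = (if i < total_rank \<and> e \<in> E (slot_deg i) \<and> slot_idx i < rk (slot_deg i) then \<iota> (slot_deg i) e (slot_idx i) else 0)"

lemma rank_le_rank_sum: "\<bar>p\<bar> \<le> int bnd \<Longrightarrow> rk p \<le> rank_sum"
  unfolding rank_sum_def by (rule member_le_sum) auto

lemma slot_deg_range: "i < total_rank \<Longrightarrow> \<bar>slot_deg i\<bar> \<le> int bnd"
proof -
  assume i: "i < total_rank"
  have "i div rank_sum < 2 * bnd + 1" using i by (simp add: total_rank_def less_mult_imp_div_less)
  then show ?thesis by (simp add: slot_deg_def)
qed

lemma gen_mem: "i < total_rank \<Longrightarrow> gen i \<in> E (slot_deg i)"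
  by (auto simp: gen_def intro: fg_proj_data_\<pi>_mem[OF data unit_vec_mem])

lemma coord_eq: "e \<in> E p \<Longrightarrow> coord e i = (if i < total_rank \<and> slot_deg i = p \<and> slot_idx i < rk p then \<iota> p e (slot_idx i) else 0)"
proof -
  assume e: "e \<in> E p"
  show ?thesis
  proof (cases "i < total_rank \<and> e \<in> E (slot_deg i) \<and> slot_idx i < rk (slot_deg i)")
    case True
    show ?thesis
    proof (cases "slot_deg i = p")
      case True
      then show ?thesis using \<open>i < total_rank \<and> e \<in> E (slot_deg i) \<and> slot_idx i < rk (slot_deg i)\<close> by (simp add: coord_def)
    next
      case False
      then have "e = 0" using E_grades_disjoint[OF e] True by auto
      then show ?thesis using True False fg_proj_data_\<iota>0[OF data E_zero] by (auto simp: coord_def)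
    qed
  next
    case False
    then show ?thesis using e by (auto simp: coord_def)
  qed
qed

lemma coord_A0: "e \<in> E p \<Longrightarrow> coord e i \<in> A 0"
  using free_comp_in[OF fg_proj_data_\<iota>_mem[OF data], of e p "slot_idx i" 0] by (simp add: coord_eq)

lemma coord_outside: "e \<in> E p \<Longrightarrow> total_rank \<le> i \<or> slot_deg i \<noteq> p \<Longrightarrow> coord e i = 0"
  by (auto simp: coord_eq)

lemma coord_add: "e \<in> E p \<Longrightarrow> e' \<in> E p \<Longrightarrow> coord (e + e') = coord e + coord e'"
proof -
  assume e: "e \<in> E p" and e': "e' \<in> E p"
  show ?thesis
    by (auto simp: fun_eq_iff coord_eq[OF E_add[OF e e']] coord_eq[OF e] coord_eq[OF e'] fg_proj_data_\<iota>_add[OF data e e'])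
qed

lemma coord_act: "e \<in> E p \<Longrightarrow> r \<in> A 0 \<Longrightarrow> coord (actE e r) = free_act (coord e) r"
proof -
  assume e: "e \<in> E p" and r: "r \<in> A 0"
  show ?thesis
    by (auto simp: fun_eq_iff coord_eq[OF actE_mem[OF e r]] coord_eq[OF e] fg_proj_data_\<iota>_act[OF data e r] free_act_def)
qed

lemma slot_props:
  assumes "\<bar>p\<bar> \<le> int bnd" and "j < rank_sum"
  shows "slot p j < total_rank \<and> slot_deg (slot p j) = p \<and> slot_idx (slot p j) = j"
proof -
  have "nat (p + int bnd) < 2 * bnd + 1" using assms(1) by simp
  then have "slot p j < (nat (p + int bnd) + 1) * rank_sum \<and> (nat (p + int bnd) + 1) * rank_sum \<le> total_rank"
    using assms(2) unfolding total_rank_def slot_def by (auto intro: mult_right_mono)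
  then show ?thesis
    using assms by (auto simp: slot_def slot_deg_def slot_idx_def)
qed

lemma slot_bij:
  assumes p: "\<bar>p\<bar> \<le> int bnd"
  shows "bij_betw (slot p) {..<rank_sum} {i. i < total_rank \<and> slot_deg i = p}"
proof (rule bij_betw_imageI)
  show "inj_on (slot p) {..<rank_sum}" by (auto simp: inj_on_def slot_def)
  show "slot p ` {..<rank_sum} = {i. i < total_rank \<and> slot_deg i = p}"
  proof (intro subset_antisym subsetI)
    fix i assume "i \<in> slot p ` {..<rank_sum}"
    then show "i \<in> {i. i < total_rank \<and> slot_deg i = p}" using slot_props[OF p] by auto
  next
    fix i assume i: "i \<in> {i. i < total_rank \<and> slot_deg i = p}"
    then have "rank_sum > 0" by (cases "rank_sum = 0") (simp_all add: total_rank_def)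
    moreover have "i = slot p (i mod rank_sum)"
      using i by (auto simp: slot_def slot_deg_def intro: div_mult_mod_eq[symmetric])
    ultimately show "i \<in> slot p ` {..<rank_sum}" by auto
  qed
qed

lemma coord_expand: "e \<in> E p \<Longrightarrow> e = (\<Sum>i\<in>{i. i < total_rank \<and> slot_deg i = p}. actE (gen i) (coord e i))"
proof (cases "\<bar>p\<bar> \<le> int bnd")
  case False
  moreover assume "e \<in> E p"
  ultimately have "e = 0" and S: "{i. i < total_rank \<and> slot_deg i = p} = {}"
    using bound[of p] slot_deg_range by auto
  then show ?thesis unfolding S by simp
next
  case p: True
  assume e: "e \<in> E p"
  have "(\<Sum>i\<in>{i. i < total_rank \<and> slot_deg i = p}. actE (gen i) (coord e i))
      = (\<Sum>j<rank_sum. actE (gen (slot p j)) (coord e (slot p j)))"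
    using sum.reindex_bij_betw[OF slot_bij[OF p], of "\<lambda>i. actE (gen i) (coord e i)"] by simp
  also have "\<dots> = (\<Sum>j<rank_sum. if j < rk p then actE (\<pi> p (unit_vec j)) (\<iota> p e j) else 0)"
    using slot_props[OF p] e by (intro sum.cong) (auto simp: gen_def coord_eq actE_lzero)
  also have "\<dots> = (\<Sum>j<rk p. actE (\<pi> p (unit_vec j)) (\<iota> p e j))"
    using rank_le_rank_sum[OF p] by (intro sum.mono_neutral_cong_right) auto
  also have "\<dots> = \<pi> p (\<iota> p e)"
    using fg_proj_data_\<pi>_decomp[OF data fg_proj_data_\<iota>_mem[OF data e]] by simp
  finally show ?thesis
    using fg_proj_data_\<pi>\<iota>[OF data e] by simp
qed

lemma frame_gen_coord: "cohesive_frame \<kappa> A dA M actM dM E actE \<psi> total_rank slot_deg gen coord"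
  by (rule cohesive_frame.intro[OF cohesive_axioms])
    (unfold_locales; fact gen_mem coord_A0 coord_outside coord_add coord_act coord_expand)

end

theorem proposition3p2:
  fixes \<kappa> :: "'k::comm_ring_1 \<Rightarrow> 'a::ring_1"
    and A :: "int \<Rightarrow> 'a set" and dA :: "'a \<Rightarrow> 'a"
    and M :: "int \<Rightarrow> 'm::ab_group_add set" and actM :: "'m \<Rightarrow> 'a \<Rightarrow> 'm" and dM :: "'m \<Rightarrow> 'm"
    and E :: "int \<Rightarrow> 'e::ab_group_add set" and actE :: "'e \<Rightarrow> 'a \<Rightarrow> 'e"
    and \<psi> :: "'e \<Rightarrow> 'a \<Rightarrow> 'm"
  assumes "dg_algebra \<kappa> A dA"
    and "dg_rmodule A dA M actM dM"
    and "cohesive_via A M actM E actE \<psi>"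
  shows "\<exists>r s dF. retract_of_free A dA M actM dM r s dF"
proof -
  interpret cohesive \<kappa> A dA M actM dM E actE \<psi>
    using assms by (simp add: cohesive_def dg_module_def dga_def dg_module_axioms_def cohesive_axioms_def)
  obtain bnd where bnd: "\<And>p. int bnd < \<bar>p\<bar> \<Longrightarrow> E p = {0}"
    using E_bounded by blast
  obtain rk \<iota> \<pi> where "\<And>p. fg_proj_data A (E p) actE (rk p) (\<iota> p) (\<pi> p)"
    using E_proj_data by metis
  then interpret cohesive_proj_family \<kappa> A dA M actM dM E actE \<psi> bnd rk \<iota> \<pi>
    using bnd by unfold_locales
  interpret cohesive_frame \<kappa> A dA M actM dM E actE \<psi> total_rank slot_deg gen coord
    by (rule frame_gen_coord)
  show ?thesis
    using graded_free_retract.retract_of_free_cone[OF graded_retract_coords] by blast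
qed

end
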